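(* Let $N=2$. Let $\Omega\subset\mathbb{R}^2$ be open, connected and simply connected, with light-cone coordinates $(\xi_L,\xi_R)$, and let $f:\Omega\to\mathbb{C}^2\setminus\{0\}$ be a smooth solution of the Euler--Lagrange equations of the $\mathbb{C}P^{1}$ sigma model on Minkowski space, $$P\Big\{\partial_L\partial_R f-\frac{1}{f^\dagger f}\big((f^\dagger\partial_R f)\,\partial_L f+(f^\dagger\partial_L f)\,\partial_R f\big)\Big\}=0,\qquad P={\bf 1}-\frac{f\otimes f^\dagger}{f^\dagger f},$$ such that the induced metric $G$ of the associated surface $X:\Omega\to su(2)\simeq\mathbb{R}^3$ (defined by $\partial_L X=[\partial_L P,P]$, $\partial_R X=-[\partial_R P,P]$) satisfies $\det G\neq 0$. Then the Gaussian curvature of the surface is constant and equal to $K=-4$; in particular the surface has no umbilical points.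
   Context: Minkowski metric $d\xi_L\,d\xi_R$ with $\xi_L=\xi^1+\xi^2$, $\xi_R=\xi^1-\xi^2$, $\partial_L=\frac12(\partial_{\xi^1}+\partial_{\xi^2})$, $\partial_R=\frac12(\partial_{\xi^1}-\partial_{\xi^2})$. $su(2)$ is identified with $\mathbb{R}^3$ via $(A,B)=-\frac12\mathrm{tr}(AB)$. For a solution $f$, $\partial_L[\partial_R P,P]+\partial_R[\partial_L P,P]=0$, so $X$ exists (up to an additive constant). The induced metric is $G_{BD}=(\partial_B X,\partial_D X)$, $B,D\in\{L,R\}$, i.e. $G_{LL}=J_L=\frac{\partial_L f^\dagger P\partial_L f}{f^\dagger f}$, $G_{RR}=J_R=\frac{\partial_R f^\dagger P\partial_R f}{f^\dagger f}$, $G_{LR}=-\Re\frac{\partial_R f^\dagger P\partial_L f}{f^\dagger f}$, and the Gaussian curvature is $K=\frac{1}{\sqrt{J_LJ_R-G_{LR}^2}}\,\partial_R\Big(\frac{\partial_L G_{LR}-\frac12 G_{LR}\partial_L(\ln J_L)}{\sqrt{J_LJ_R-G_{LR}^2}}\Big)$. *)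

theory Defs
  imports "HOL-Analysis.Analysis"
begin

primrec Ck :: "nat \<Rightarrow> ('a::real_normed_vector \<Rightarrow> 'b::real_normed_vector) \<Rightarrow> 'a set \<Rightarrow> bool" where
  "Ck 0 g S = continuous_on S g"
| "Ck (Suc k) g S = (g differentiable_on S \<and> (\<forall>v. Ck k (\<lambda>x. frechet_derivative g (at x) v) S))"

definition smooth_on :: "'a::real_normed_vector set \<Rightarrow> ('a \<Rightarrow> 'b::real_normed_vector) \<Rightarrow> bool" where
  "smooth_on S g \<longleftrightarrow> (\<forall>k. Ck k g S)"

text \<open>Points of R^2 are pairs (xi1, xi2); xi_L = xi1 + xi2, xi_R = xi1 - xi2.\<close>

definition d1 :: "(real \<times> real \<Rightarrow> 'b::real_normed_vector) \<Rightarrow> real \<times> real \<Rightarrow> 'b" where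
  "d1 g x = frechet_derivative g (at x) (1, 0)"

definition d2 :: "(real \<times> real \<Rightarrow> 'b::real_normed_vector) \<Rightarrow> real \<times> real \<Rightarrow> 'b" where
  "d2 g x = frechet_derivative g (at x) (0, 1)"

definition dL :: "(real \<times> real \<Rightarrow> 'b::real_normed_vector) \<Rightarrow> real \<times> real \<Rightarrow> 'b" where
  "dL g x = (1/2) *\<^sub>R (d1 g x + d2 g x)"

definition dR :: "(real \<times> real \<Rightarrow> 'b::real_normed_vector) \<Rightarrow> real \<times> real \<Rightarrow> 'b" where
  "dR g x = (1/2) *\<^sub>R (d1 g x - d2 g x)"

definition herm :: "complex^2 \<Rightarrow> complex^2 \<Rightarrow> complex" where
  "herm u v = (\<Sum>i\<in>UNIV. cnj (u $ i) * v $ i)"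

definition outer :: "complex^2 \<Rightarrow> complex^2 \<Rightarrow> complex^2^2" where
  "outer u v = (\<chi> i j. u $ i * cnj (v $ j))"

definition cmat_scale :: "complex \<Rightarrow> complex^2^2 \<Rightarrow> complex^2^2" where
  "cmat_scale c A = (\<chi> i j. c * A $ i $ j)"

definition cvec_scale :: "complex \<Rightarrow> complex^2 \<Rightarrow> complex^2" where
  "cvec_scale c v = (\<chi> i. c * v $ i)"

definition proj :: "complex^2 \<Rightarrow> complex^2^2" where
  "proj v = mat 1 - cmat_scale (1 / herm v v) (outer v v)"

definition comm :: "complex^2^2 \<Rightarrow> complex^2^2 \<Rightarrow> complex^2^2" where
  "comm A B = A ** B - B ** A"

text \<open>The identification su(2) = R^3 via (A,B) = -1/2 tr(AB) (real part taken; tr(AB) is real on su(2)).\<close>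
definition su2_inner :: "complex^2^2 \<Rightarrow> complex^2^2 \<Rightarrow> real" where
  "su2_inner A B = - (1/2) * Re (\<Sum>i\<in>UNIV. (A ** B) $ i $ i)"

definition CP1_EL :: "(real \<times> real \<Rightarrow> complex^2) \<Rightarrow> real \<times> real \<Rightarrow> bool" where
  "CP1_EL f x \<longleftrightarrow>
     proj (f x) *v
       (dL (dR f) x
        - cvec_scale (1 / herm (f x) (f x))
            (cvec_scale (herm (f x) (dR f x)) (dL f x)
             + cvec_scale (herm (f x) (dL f x)) (dR f x))) = 0"

definition Pf :: "(real \<times> real \<Rightarrow> complex^2) \<Rightarrow> real \<times> real \<Rightarrow> complex^2^2" where
  "Pf f x = proj (f x)"

definition dLX :: "(real \<times> real \<Rightarrow> complex^2) \<Rightarrow> real \<times> real \<Rightarrow> complex^2^2" where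
  "dLX f x = comm (dL (Pf f) x) (Pf f x)"

definition dRX :: "(real \<times> real \<Rightarrow> complex^2) \<Rightarrow> real \<times> real \<Rightarrow> complex^2^2" where
  "dRX f x = - comm (dR (Pf f) x) (Pf f x)"

definition G_LL :: "(real \<times> real \<Rightarrow> complex^2) \<Rightarrow> real \<times> real \<Rightarrow> real" where
  "G_LL f x = su2_inner (dLX f x) (dLX f x)"

definition G_RR :: "(real \<times> real \<Rightarrow> complex^2) \<Rightarrow> real \<times> real \<Rightarrow> real" where
  "G_RR f x = su2_inner (dRX f x) (dRX f x)"

definition G_LR :: "(real \<times> real \<Rightarrow> complex^2) \<Rightarrow> real \<times> real \<Rightarrow> real" where
  "G_LR f x = su2_inner (dLX f x) (dRX f x)"

definition detG :: "(real \<times> real \<Rightarrow> complex^2) \<Rightarrow> real \<times> real \<Rightarrow> real" where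
  "detG f x = G_LL f x * G_RR f x - (G_LR f x)\<^sup>2"

definition gauss_curv :: "(real \<times> real \<Rightarrow> complex^2) \<Rightarrow> real \<times> real \<Rightarrow> real" where
  "gauss_curv f x =
     1 / sqrt (detG f x) *
     dR (\<lambda>y. (dL (G_LR f) y - 1/2 * G_LR f y * dL (\<lambda>z. ln (G_LL f z)) y) / sqrt (detG f y)) x"

end

theory Submission
  imports Defs
begin

text \<open>Writing the projector as \<open>P = 1/2 + pauli \<nu>\<close> identifies the solution with a map \<open>\<nu>\<close> into
  the unit sphere of \<open>\<real>\<^sup>3\<close>, its Bloch vector. Then \<open>\<partial>\<^sub>L X = i pauli (\<nu>\<^sub>L \<times> \<nu>)\<close> and
  \<open>\<partial>\<^sub>R X = -i pauli (\<nu>\<^sub>R \<times> \<nu>)\<close>, so \<open>\<nu>\<close> is the unit normal of the surface and the induced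
  metric is a quarter of the pull-back \<open>E, F, G\<close> of the round metric by \<open>\<nu>\<close>. Projecting the
  Euler--Lagrange equations gives \<open>P (\<partial>\<^sub>L\<partial>\<^sub>R P) (1 - P) = 0\<close>, which is the wave map equation
  \<open>\<nu>\<^sub>L\<^sub>R = -(\<nu>\<^sub>L \<bullet> \<nu>\<^sub>R) \<nu>\<close>. With it, and the symmetry of mixed partial derivatives, every
  derivative in the curvature formula is expressed through \<open>\<nu>\<^sub>L, \<nu>\<^sub>R, \<nu>\<^sub>L\<^sub>L, \<nu>\<^sub>R\<^sub>R\<close>, and
  \<open>K = -4\<close> reduces to a Gram determinant identity in \<open>\<real>\<^sup>3\<close>, valid because \<open>\<nu>\<^sub>L\<close> and \<open>\<nu>\<^sub>R\<close>
  span the plane orthogonal to \<open>\<nu>\<close>.\<close>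

section \<open>Smooth maps\<close>

lemma Ck_Suc_imp_Ck: "Ck (Suc k) g S \<Longrightarrow> Ck k g S"
proof (induction k arbitrary: g)
  case 0 then show ?case by (auto simp: differentiable_imp_continuous_on)
next
  case (Suc k) then show ?case by auto
qed

lemma Ck_Suc_has_derivative:
  assumes "Ck (Suc k) g S" "open S" "x \<in> S"
  shows "(g has_derivative frechet_derivative g (at x)) (at x)"
  using assms by (metis Ck.simps(2) differentiable_on_eq_differentiable_at frechet_derivative_works)

lemma Ck_cong:
  assumes "open S" "\<And>x. x \<in> S \<Longrightarrow> g x = h x" "Ck k g S"
  shows "Ck k h S"
  using assms(2,3)
proof (induction k arbitrary: g h)
  case 0 then show ?case using continuous_on_cong by force
next
  case (Suc k)
  have dg: "(g has_derivative frechet_derivative g (at x)) (at x)" if "x \<in> S" for x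
    using Ck_Suc_has_derivative[OF Suc.prems(2) assms(1) that] .
  have dh: "(h has_derivative frechet_derivative g (at x)) (at x)" if "x \<in> S" for x
    using has_derivative_transform_within_open[OF dg[OF that] assms(1) that] Suc.prems(1) by blast
  have "h differentiable_on S"
    using dh assms(1) differentiable_on_eq_differentiable_at differentiableI by blast
  moreover have "frechet_derivative g (at x) = frechet_derivative h (at x)" if "x \<in> S" for x
    using frechet_derivative_at[OF dh[OF that]] .
  then have "Ck k (\<lambda>x. frechet_derivative h (at x) v) S" for v
    using Suc.IH[of "\<lambda>x. frechet_derivative g (at x) v"] Suc.prems(2) by simp
  ultimately show ?case by simp
qed

lemma Ck_SucI:
  assumes "open S" "\<And>x. x \<in> S \<Longrightarrow> (g has_derivative g' x) (at x)"
    "\<And>v. Ck k (\<lambda>x. g' x v) S"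
  shows "Ck (Suc k) g S"
proof -
  have "g differentiable_on S"
    using assms(1,2) differentiable_on_eq_differentiable_at differentiableI by blast
  moreover have "Ck k (\<lambda>x. frechet_derivative g (at x) v) S" for v
    by (rule Ck_cong[OF assms(1) _ assms(3)[of v]]) (use assms(2) frechet_derivative_at in metis)
  ultimately show ?thesis by simp
qed

lemma Ck_const: "Ck k (\<lambda>x. c) S"
  by (induction k arbitrary: c) simp_all

lemma Ck_linear:
  assumes "bounded_linear L" "open S" "Ck k g S"
  shows "Ck k (\<lambda>x. L (g x)) S"
  using assms(3)
proof (induction k arbitrary: g)
  case 0 then show ?case
    by (simp add: assms(1) bounded_linear.continuous_on)
next
  case (Suc k)
  show ?case
  proof (rule Ck_SucI[OF assms(2)])
    show "((\<lambda>x. L (g x)) has_derivative (\<lambda>v. L (frechet_derivative g (at x) v))) (at x)"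
      if "x \<in> S" for x
      by (rule bounded_linear.has_derivative[OF assms(1) Ck_Suc_has_derivative[OF Suc.prems assms(2) that]])
    show "Ck k (\<lambda>x. L (frechet_derivative g (at x) v)) S" for v
      using Suc.IH Suc.prems by auto
  qed
qed

lemma Ck_add:
  assumes "open S" "Ck k g S" "Ck k h S"
  shows "Ck k (\<lambda>x. g x + h x) S"
  using assms(2,3)
proof (induction k arbitrary: g h)
  case 0 then show ?case by (simp add: continuous_on_add)
next
  case (Suc k)
  show ?case
  proof (rule Ck_SucI[OF assms(1)])
    show "((\<lambda>x. g x + h x) has_derivative
          (\<lambda>v. frechet_derivative g (at x) v + frechet_derivative h (at x) v)) (at x)" if "x \<in> S" for x
      by (rule has_derivative_add[OF Ck_Suc_has_derivative[OF Suc.prems(1) assms(1) that]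
            Ck_Suc_has_derivative[OF Suc.prems(2) assms(1) that]])
    show "Ck k (\<lambda>x. frechet_derivative g (at x) v + frechet_derivative h (at x) v) S" for v
      using Suc.IH Suc.prems by auto
  qed
qed

lemma Ck_bilinear:
  fixes prod :: "'b::real_normed_vector \<Rightarrow> 'c::real_normed_vector \<Rightarrow> 'd::real_normed_vector"
    and g :: "'a::real_normed_vector \<Rightarrow> 'b" and h :: "'a \<Rightarrow> 'c"
  assumes bb: "bounded_bilinear prod" and S: "open S"
  shows "Ck k g S \<Longrightarrow> Ck k h S \<Longrightarrow> Ck k (\<lambda>x. prod (g x) (h x)) S"
proof (induction k arbitrary: g h)
  case 0 then show ?case by (simp add: bounded_bilinear.continuous_on[OF bb])
next
  case (Suc k)
  show ?case
  proof (rule Ck_SucI[OF S])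
    show "((\<lambda>x. prod (g x) (h x)) has_derivative
          (\<lambda>v. prod (g x) (frechet_derivative h (at x) v) + prod (frechet_derivative g (at x) v) (h x))) (at x)"
      if "x \<in> S" for x
      by (rule bounded_bilinear.FDERIV[OF bb Ck_Suc_has_derivative[OF Suc.prems(1) S that]
            Ck_Suc_has_derivative[OF Suc.prems(2) S that]])
    fix v
    have "Ck k g S" "Ck k h S" using Suc.prems Ck_Suc_imp_Ck by blast+
    moreover have "Ck k (\<lambda>x. frechet_derivative g (at x) v) S" "Ck k (\<lambda>x. frechet_derivative h (at x) v) S"
      using Suc.prems by auto
    ultimately show "Ck k (\<lambda>x. prod (g x) (frechet_derivative h (at x) v)
        + prod (frechet_derivative g (at x) v) (h x)) S"
      by (intro Ck_add[OF S] Suc.IH)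
  qed
qed

lemma Ck_inverse:
  fixes g :: "'a::real_normed_vector \<Rightarrow> 'b::real_normed_field"
  assumes S: "open S" and nz: "\<And>x. x \<in> S \<Longrightarrow> g x \<noteq> 0"
  shows "Ck k g S \<Longrightarrow> Ck k (\<lambda>x. inverse (g x)) S"
proof (induction k)
  case 0 then show ?case using nz by (auto intro!: continuous_on_inverse)
next
  case (Suc k)
  show ?case
  proof (rule Ck_SucI[OF S])
    show "((\<lambda>x. inverse (g x)) has_derivative
          (\<lambda>v. - (inverse (g x) * frechet_derivative g (at x) v * inverse (g x)))) (at x)"
      if "x \<in> S" for x
      by (rule Deriv.has_derivative_inverse[OF nz[OF that] Ck_Suc_has_derivative[OF Suc.prems S that]])
    fix v
    have "Ck k (\<lambda>x. inverse (g x)) S" using Suc.IH Suc.prems Ck_Suc_imp_Ck by blast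
    moreover have "Ck k (\<lambda>x. frechet_derivative g (at x) v) S" using Suc.prems by auto
    ultimately have "Ck k (\<lambda>x. inverse (g x) * frechet_derivative g (at x) v * inverse (g x)) S"
      by (intro Ck_bilinear[OF bounded_bilinear_mult S])
    then show "Ck k (\<lambda>x. - (inverse (g x) * frechet_derivative g (at x) v * inverse (g x))) S"
      by (rule Ck_linear[OF bounded_linear_minus[OF bounded_linear_ident] S])
  qed
qed

lemma Ck_sum:
  assumes "open S" "finite I" "\<And>i. i \<in> I \<Longrightarrow> Ck k (g i) S"
  shows "Ck k (\<lambda>x. \<Sum>i\<in>I. g i x) S"
  using assms(2,3) by (induction I rule: finite_induct) (simp_all add: Ck_const Ck_add[OF assms(1)])

lemma bounded_linear_axis: "bounded_linear (\<lambda>c::'a::real_normed_vector. axis i c)"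
proof (rule bounded_linear_intro[where K=1])
  show "axis i (x + y) = axis i x + axis i y" for x y :: 'a
    by (simp add: vec_eq_iff axis_def)
  show "axis i (r *\<^sub>R x) = r *\<^sub>R axis i x" for r and x :: 'a
    by (simp add: vec_eq_iff axis_def)
  show "norm (axis i x) \<le> norm x * 1" for x :: 'a
  proof -
    have "(\<Sum>j\<in>UNIV. (norm (axis i x $ j))\<^sup>2) = (\<Sum>j\<in>UNIV. if j = i then (norm x)\<^sup>2 else 0)"
      by (rule sum.cong) (auto simp: axis_def)
    then show ?thesis unfolding norm_vec_def L2_set_def by simp
  qed
qed

lemma vec_lambda_eq_sum_axis: "(\<chi> i. g i) = (\<Sum>i\<in>UNIV. axis i (g i :: 'a::comm_monoid_add))"
  by (simp add: vec_eq_iff axis_def if_distrib cong: if_cong)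

lemma Ck_vec_lambda:
  assumes "open S" "\<And>i. Ck k (g i) S"
  shows "Ck k (\<lambda>x. \<chi> i. g i x) S"
  unfolding vec_lambda_eq_sum_axis
  by (intro Ck_sum Ck_linear[OF bounded_linear_axis] assms) simp

lemma smooth_on_imp_continuous_on: "smooth_on S g \<Longrightarrow> continuous_on S g"
  unfolding smooth_on_def by (metis Ck.simps(1))

lemma smooth_on_has_derivative:
  "smooth_on S g \<Longrightarrow> open S \<Longrightarrow> x \<in> S \<Longrightarrow> (g has_derivative frechet_derivative g (at x)) (at x)"
  unfolding smooth_on_def using Ck_Suc_has_derivative by blast

lemma smooth_on_frechet_derivative:
  "smooth_on S g \<Longrightarrow> smooth_on S (\<lambda>x. frechet_derivative g (at x) v)"
  unfolding smooth_on_def by (metis Ck.simps(2))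

lemma smooth_on_cong:
  "open S \<Longrightarrow> (\<And>x. x \<in> S \<Longrightarrow> g x = h x) \<Longrightarrow> smooth_on S g \<Longrightarrow> smooth_on S h"
  unfolding smooth_on_def using Ck_cong by blast

lemma smooth_on_const: "smooth_on S (\<lambda>x. c)"
  unfolding smooth_on_def using Ck_const by blast

lemma smooth_on_add:
  "open S \<Longrightarrow> smooth_on S g \<Longrightarrow> smooth_on S h \<Longrightarrow> smooth_on S (\<lambda>x. g x + h x)"
  unfolding smooth_on_def using Ck_add by blast

lemma smooth_on_linear:
  "bounded_linear L \<Longrightarrow> open S \<Longrightarrow> smooth_on S g \<Longrightarrow> smooth_on S (\<lambda>x. L (g x))"
  unfolding smooth_on_def using Ck_linear by blast

lemma smooth_on_bilinear:
  fixes prod :: "'b::real_normed_vector \<Rightarrow> 'c::real_normed_vector \<Rightarrow> 'd::real_normed_vector"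
    and g :: "'a::real_normed_vector \<Rightarrow> 'b" and h :: "'a \<Rightarrow> 'c"
  shows "bounded_bilinear prod \<Longrightarrow> open S \<Longrightarrow> smooth_on S g \<Longrightarrow> smooth_on S h \<Longrightarrow>
    smooth_on S (\<lambda>x. prod (g x) (h x))"
  unfolding smooth_on_def using Ck_bilinear by blast

lemma smooth_on_inverse:
  fixes g :: "'a::real_normed_vector \<Rightarrow> 'b::real_normed_field"
  shows "open S \<Longrightarrow> (\<And>x. x \<in> S \<Longrightarrow> g x \<noteq> 0) \<Longrightarrow> smooth_on S g \<Longrightarrow>
    smooth_on S (\<lambda>x. inverse (g x))"
  unfolding smooth_on_def using Ck_inverse by blast

lemma smooth_on_vec_lambda:
  "open S \<Longrightarrow> (\<And>i. smooth_on S (g i)) \<Longrightarrow> smooth_on S (\<lambda>x. \<chi> i. g i x)"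
  unfolding smooth_on_def using Ck_vec_lambda by blast

lemma smooth_on_mult:
  fixes g h :: "'a::real_normed_vector \<Rightarrow> 'b::real_normed_algebra"
  shows "open S \<Longrightarrow> smooth_on S g \<Longrightarrow> smooth_on S h \<Longrightarrow> smooth_on S (\<lambda>x. g x * h x)"
  using smooth_on_bilinear[OF bounded_bilinear_mult] by blast

lemma smooth_on_inner:
  "open S \<Longrightarrow> smooth_on S g \<Longrightarrow> smooth_on S h \<Longrightarrow> smooth_on S (\<lambda>x. g x \<bullet> h x)"
  using smooth_on_bilinear[OF bounded_bilinear_inner] by blast

lemma smooth_on_minus: "open S \<Longrightarrow> smooth_on S g \<Longrightarrow> smooth_on S (\<lambda>x. - g x)"
  using smooth_on_linear[OF bounded_linear_minus[OF bounded_linear_ident]] by blast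

lemma smooth_on_diff:
  "open S \<Longrightarrow> smooth_on S g \<Longrightarrow> smooth_on S h \<Longrightarrow> smooth_on S (\<lambda>x. g x - h x)"
  using smooth_on_add[of S g "\<lambda>x. - h x"] smooth_on_minus by auto

lemma smooth_on_cnj: "open S \<Longrightarrow> smooth_on S g \<Longrightarrow> smooth_on S (\<lambda>x. cnj (g x))"
  using smooth_on_linear[OF bounded_linear_cnj] by blast

lemma smooth_on_vec_nth: "open S \<Longrightarrow> smooth_on S g \<Longrightarrow> smooth_on S (\<lambda>x. g x $ i)"
  using smooth_on_linear[OF bounded_linear_vec_nth] by blast

lemma smooth_on_divide:
  fixes g h :: "'a::real_normed_vector \<Rightarrow> 'b::real_normed_field"
  shows "open S \<Longrightarrow> (\<And>x. x \<in> S \<Longrightarrow> h x \<noteq> 0) \<Longrightarrow> smooth_on S g \<Longrightarrow> smooth_on S h \<Longrightarrow>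
    smooth_on S (\<lambda>x. g x / h x)"
  unfolding divide_inverse using smooth_on_mult smooth_on_inverse by blast

section \<open>Symmetry of second derivatives\<close>

lemma norm_segment_increment_le:
  fixes \<phi> :: "'a::real_normed_vector \<Rightarrow> 'b::real_normed_vector"
  assumes h: "0 \<le> h" and seg: "\<And>t. t \<in> {0..h} \<Longrightarrow> y + t *\<^sub>R w \<in> S"
    and d\<phi>: "\<And>z. z \<in> S \<Longrightarrow> (\<phi> has_derivative D\<phi> z) (at z)"
    and bound: "\<And>t. t \<in> {0..h} \<Longrightarrow> norm (D\<phi> (y + t *\<^sub>R w) w - B) \<le> \<epsilon>"
  shows "norm (\<phi> (y + h *\<^sub>R w) - \<phi> y - h *\<^sub>R B) \<le> \<epsilon> * h"
proof -
  define c where "c t = \<phi> (y + t *\<^sub>R w) - t *\<^sub>R B" for t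
  have "(c has_derivative (\<lambda>d. d *\<^sub>R (D\<phi> (y + t *\<^sub>R w) w - B))) (at t within {0..h})"
    if t: "t \<in> {0..h}" for t
  proof -
    have "((\<lambda>t. y + t *\<^sub>R w) has_derivative (\<lambda>d. d *\<^sub>R w)) (at t within {0..h})"
      by (auto intro!: derivative_eq_intros)
    from has_derivative_compose[OF this d\<phi>[OF seg[OF t]]]
    have "(c has_derivative (\<lambda>d. D\<phi> (y + t *\<^sub>R w) (d *\<^sub>R w) - d *\<^sub>R B)) (at t within {0..h})"
      unfolding c_def by (intro derivative_intros)
    moreover have "linear (D\<phi> (y + t *\<^sub>R w))" using d\<phi>[OF seg[OF t]] has_derivative_linear by blast
    ultimately show ?thesis by (simp add: linear_scale scaleR_diff_right)
  qed
  moreover have "onorm (\<lambda>d. d *\<^sub>R (D\<phi> (y + t *\<^sub>R w) w - B)) \<le> \<epsilon>" if "t \<in> {0..h}" for t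
    using bound[OF that] by (simp add: onorm_scaleR_left[OF bounded_linear_ident] onorm_id)
  ultimately have "norm (c h - c 0) \<le> \<epsilon> * norm (h - 0)"
    using h by (intro differentiable_bound[of "{0..h}"]) auto
  then show ?thesis using h by (simp add: c_def algebra_simps)
qed

lemma second_difference_approx:
  fixes g :: "'a::real_normed_vector \<Rightarrow> 'b::real_normed_vector"
  assumes h: "0 \<le> h"
    and inS: "\<And>s t. s \<in> {0..h} \<Longrightarrow> t \<in> {0..h} \<Longrightarrow> x + t *\<^sub>R u + s *\<^sub>R v \<in> S"
    and dg: "\<And>y. y \<in> S \<Longrightarrow> (g has_derivative Dg y) (at y)"
    and dDg: "\<And>y. y \<in> S \<Longrightarrow> ((\<lambda>z. Dg z v) has_derivative DDg y) (at y)"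
    and DDg: "\<And>s t. s \<in> {0..h} \<Longrightarrow> t \<in> {0..h} \<Longrightarrow> norm (DDg (x + t *\<^sub>R u + s *\<^sub>R v) u - A) \<le> \<epsilon>"
  shows "norm (g (x + h *\<^sub>R u + h *\<^sub>R v) - g (x + h *\<^sub>R u) - g (x + h *\<^sub>R v) + g x - (h * h) *\<^sub>R A)
    \<le> \<epsilon> * h * h"
proof -
  have inner: "norm (Dg (x + s *\<^sub>R v + h *\<^sub>R u) v - Dg (x + s *\<^sub>R v) v - h *\<^sub>R A) \<le> \<epsilon> * h"
    if s: "s \<in> {0..h}" for s
    by (rule norm_segment_increment_le[OF h _ dDg])
      (use inS[OF s] DDg[OF s] in \<open>simp_all add: algebra_simps\<close>)
  let ?S = "{z. z \<in> S \<and> z + h *\<^sub>R u \<in> S}"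
  have "norm ((g (x + h *\<^sub>R v + h *\<^sub>R u) - g (x + h *\<^sub>R v)) - (g (x + h *\<^sub>R u) - g x) - h *\<^sub>R (h *\<^sub>R A))
      \<le> (\<epsilon> * h) * h"
  proof (rule norm_segment_increment_le[OF h, where S="?S"])
    show "x + t *\<^sub>R v \<in> ?S" if "t \<in> {0..h}" for t
      using inS[OF that, of 0] inS[OF that, of h] h by (simp add: algebra_simps)
    show "((\<lambda>z. g (z + h *\<^sub>R u) - g z) has_derivative (\<lambda>k. Dg (z + h *\<^sub>R u) k - Dg z k)) (at z)"
      if "z \<in> ?S" for z
    proof -
      have "((\<lambda>z. z + h *\<^sub>R u) has_derivative (\<lambda>k. k)) (at z)" by (auto intro!: derivative_eq_intros)
      from has_derivative_compose[OF this dg] that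
      show ?thesis by (auto intro!: has_derivative_diff dg)
    qed
  qed (use inner in \<open>simp add: algebra_simps\<close>)
  then show ?thesis by (simp add: algebra_simps)
qed

lemma second_difference_approx_mixed_derivative:
  fixes g :: "'a::real_normed_vector \<Rightarrow> 'b::real_normed_vector"
  assumes S: "open S" and x: "x \<in> S" and g: "smooth_on S g" and "\<epsilon> > 0"
  shows "\<exists>d>0. \<forall>h. 0 < h \<and> h < d \<longrightarrow>
    norm (g (x + h *\<^sub>R u + h *\<^sub>R v) - g (x + h *\<^sub>R u) - g (x + h *\<^sub>R v) + g x
      - (h * h) *\<^sub>R frechet_derivative (\<lambda>y. frechet_derivative g (at y) v) (at x) u) \<le> \<epsilon> * h * h"
proof -
  define D2 where "D2 y = frechet_derivative (\<lambda>z. frechet_derivative g (at z) v) (at y)" for y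
  have "continuous (at x) (\<lambda>y. D2 y u)"
    using smooth_on_imp_continuous_on[OF smooth_on_frechet_derivative[OF smooth_on_frechet_derivative[OF g]]]
      S x unfolding D2_def by (simp add: continuous_on_eq_continuous_at)
  then obtain d1 where d1: "d1 > 0" "\<And>y. dist y x < d1 \<Longrightarrow> dist (D2 y u) (D2 x u) < \<epsilon>"
    using \<open>\<epsilon> > 0\<close> unfolding continuous_at_eps_delta by blast
  obtain d0 where d0: "d0 > 0" "ball x d0 \<subseteq> S" using S x open_contains_ball by blast
  have N: "norm u + norm v + 1 > 0" using norm_ge_zero[of u] norm_ge_zero[of v] by linarith
  define d where "d = min d0 d1 / (norm u + norm v + 1)"
  have "d > 0" using d0 d1 N by (simp add: d_def)
  moreover have "norm (g (x + h *\<^sub>R u + h *\<^sub>R v) - g (x + h *\<^sub>R u) - g (x + h *\<^sub>R v) + g x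
      - (h * h) *\<^sub>R D2 x u) \<le> \<epsilon> * h * h" if h: "0 < h" "h < d" for h
  proof -
    have near: "dist (x + t *\<^sub>R u + s *\<^sub>R v) x < min d0 d1" if "s \<in> {0..h}" "t \<in> {0..h}" for s t
    proof -
      have "dist (x + t *\<^sub>R u + s *\<^sub>R v) x \<le> h * (norm u + norm v + 1)"
        using that norm_triangle_ineq[of "t *\<^sub>R u" "s *\<^sub>R v"] mult_right_mono[of t h "norm u"]
          mult_right_mono[of s h "norm v"] h by (simp add: dist_norm algebra_simps)
      also have "\<dots> < min d0 d1" using h N by (simp add: d_def field_simps)
      finally show ?thesis .
    qed
    show ?thesis
    proof (rule second_difference_approx[where Dg="\<lambda>y. frechet_derivative g (at y)" and S=S])
      fix s t assume "s \<in> {0..h}" "t \<in> {0..h}"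
      then have "dist x (x + t *\<^sub>R u + s *\<^sub>R v) < d0" "dist (x + t *\<^sub>R u + s *\<^sub>R v) x < d1"
        using near by (auto simp: dist_commute)
      then show "x + t *\<^sub>R u + s *\<^sub>R v \<in> S" "norm (D2 (x + t *\<^sub>R u + s *\<^sub>R v) u - D2 x u) \<le> \<epsilon>"
        using d0(2) d1(2) by (auto simp: dist_norm[symmetric] less_imp_le)
    qed (use h smooth_on_has_derivative[OF g S] smooth_on_has_derivative[OF smooth_on_frechet_derivative[OF g] S]
        in \<open>auto simp: D2_def\<close>)
  qed
  ultimately show ?thesis unfolding D2_def by blast
qed

text \<open>The second difference is symmetric in \<open>u\<close> and \<open>v\<close>, and it approximates \<open>h\<^sup>2\<close> times
  either mixed derivative.\<close>

lemma frechet_derivative_commute: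
  fixes g :: "'a::real_normed_vector \<Rightarrow> 'b::real_normed_vector"
  assumes S: "open S" and x: "x \<in> S" and g: "smooth_on S g"
  shows "frechet_derivative (\<lambda>y. frechet_derivative g (at y) v) (at x) u
       = frechet_derivative (\<lambda>y. frechet_derivative g (at y) u) (at x) v"
    (is "?A = ?B")
proof -
  have "norm (?A - ?B) \<le> 0 + \<epsilon>" if \<epsilon>: "\<epsilon> > 0" for \<epsilon>
  proof -
    obtain d d' where "d > 0" "d' > 0"
      and A: "\<And>h. 0 < h \<and> h < d \<Longrightarrow> norm (g (x + h *\<^sub>R u + h *\<^sub>R v) - g (x + h *\<^sub>R u) - g (x + h *\<^sub>R v) + g x
        - (h * h) *\<^sub>R ?A) \<le> \<epsilon> / 2 * h * h"
      and B: "\<And>h. 0 < h \<and> h < d' \<Longrightarrow> norm (g (x + h *\<^sub>R v + h *\<^sub>R u) - g (x + h *\<^sub>R v) - g (x + h *\<^sub>R u) + g x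
        - (h * h) *\<^sub>R ?B) \<le> \<epsilon> / 2 * h * h"
      using second_difference_approx_mixed_derivative[OF S x g half_gt_zero[OF \<epsilon>], of u v]
        second_difference_approx_mixed_derivative[OF S x g half_gt_zero[OF \<epsilon>], of v u] by blast
    define h where "h = min d d' / 2"
    have h: "0 < h" "h < d" "h < d'" using \<open>d > 0\<close> \<open>d' > 0\<close> by (auto simp: h_def)
    have "norm ((h * h) *\<^sub>R (?A - ?B)) \<le> \<epsilon> / 2 * h * h + \<epsilon> / 2 * h * h"
      using norm_triangle_ineq4[of "g (x + h *\<^sub>R u + h *\<^sub>R v) - g (x + h *\<^sub>R u) - g (x + h *\<^sub>R v) + g x - (h * h) *\<^sub>R ?B"
          "g (x + h *\<^sub>R u + h *\<^sub>R v) - g (x + h *\<^sub>R u) - g (x + h *\<^sub>R v) + g x - (h * h) *\<^sub>R ?A"]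
        A[of h] B[of h] h by (simp add: algebra_simps)
    then have "h * h * norm (?A - ?B) \<le> h * h * \<epsilon>"
      by (simp only: norm_scaleR abs_mult abs_of_pos[OF h(1)]) (simp add: algebra_simps)
    then show ?thesis using h(1) by simp
  qed
  then have "norm (?A - ?B) \<le> 0" by (rule field_le_epsilon)
  then show ?thesis by simp
qed

section \<open>Light-cone derivatives\<close>

lemma dL_eq_derivative:
  assumes "(g has_derivative g') (at x)"
  shows "dL g x = g' (1/2, 1/2)"
proof -
  have "linear g'" using assms has_derivative_linear by blast
  then have "g' (1/2, 1/2) = (1/2) *\<^sub>R (g' (1, 0) + g' (0, 1))"
    using linear_add[of g' "(1, 0)" "(0, 1)"] linear_scale[of g' "1/2" "(1, 1)"] by simp
  then show ?thesis unfolding dL_def d1_def d2_def frechet_derivative_at[OF assms, symmetric] ..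
qed

lemma dR_eq_derivative:
  assumes "(g has_derivative g') (at x)"
  shows "dR g x = g' (1/2, -1/2)"
proof -
  have "linear g'" using assms has_derivative_linear by blast
  then have "g' (1/2, -1/2) = (1/2) *\<^sub>R (g' (1, 0) - g' (0, 1))"
    using linear_diff[of g' "(1, 0)" "(0, 1)"] linear_scale[of g' "1/2" "(1, -1)"] by simp
  then show ?thesis unfolding dR_def d1_def d2_def frechet_derivative_at[OF assms, symmetric] ..
qed

lemma frechet_derivative_cong:
  assumes "open S" "x \<in> S" "\<And>y. y \<in> S \<Longrightarrow> g y = h y"
  shows "frechet_derivative g (at x) = frechet_derivative h (at x)"
proof -
  have "(g has_derivative D) (at x) \<longleftrightarrow> (h has_derivative D) (at x)" for D
    using has_derivative_transform_within_open[OF _ assms(1,2), of g D UNIV h]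
      has_derivative_transform_within_open[OF _ assms(1,2), of h D UNIV g] assms(3) by auto
  then show ?thesis unfolding frechet_derivative_def by simp
qed

lemma dL_cong:
  assumes "open S" "x \<in> S" "\<And>y. y \<in> S \<Longrightarrow> g y = h y"
  shows "dL g x = dL h x"
  using frechet_derivative_cong[OF assms] by (simp add: dL_def d1_def d2_def)

lemma dR_cong:
  assumes "open S" "x \<in> S" "\<And>y. y \<in> S \<Longrightarrow> g y = h y"
  shows "dR g x = dR h x"
  using frechet_derivative_cong[OF assms] by (simp add: dR_def d1_def d2_def)

lemma dL_eq_frechet_derivative:
  "smooth_on S g \<Longrightarrow> open S \<Longrightarrow> x \<in> S \<Longrightarrow> dL g x = frechet_derivative g (at x) (1/2, 1/2)"
  by (rule dL_eq_derivative[OF smooth_on_has_derivative])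

lemma dR_eq_frechet_derivative:
  "smooth_on S g \<Longrightarrow> open S \<Longrightarrow> x \<in> S \<Longrightarrow> dR g x = frechet_derivative g (at x) (1/2, -1/2)"
  by (rule dR_eq_derivative[OF smooth_on_has_derivative])

lemma smooth_on_dL: "smooth_on S g \<Longrightarrow> open S \<Longrightarrow> smooth_on S (dL g)"
  by (rule smooth_on_cong[OF _ _ smooth_on_frechet_derivative]) (simp_all add: dL_eq_frechet_derivative)

lemma smooth_on_dR: "smooth_on S g \<Longrightarrow> open S \<Longrightarrow> smooth_on S (dR g)"
  by (rule smooth_on_cong[OF _ _ smooth_on_frechet_derivative]) (simp_all add: dR_eq_frechet_derivative)

lemma dL_bilinear:
  fixes prod :: "'b::real_normed_vector \<Rightarrow> 'c::real_normed_vector \<Rightarrow> 'd::real_normed_vector"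
  assumes "bounded_bilinear prod" and u: "smooth_on S u" and w: "smooth_on S w" and "open S" "x \<in> S"
  shows "dL (\<lambda>x. prod (u x) (w x)) x = prod (u x) (dL w x) + prod (dL u x) (w x)"
  using dL_eq_derivative[OF bounded_bilinear.FDERIV[OF assms(1)
      smooth_on_has_derivative[OF u assms(4,5)] smooth_on_has_derivative[OF w assms(4,5)]]]
    dL_eq_frechet_derivative[OF u assms(4,5)] dL_eq_frechet_derivative[OF w assms(4,5)] by simp

lemma dR_bilinear:
  fixes prod :: "'b::real_normed_vector \<Rightarrow> 'c::real_normed_vector \<Rightarrow> 'd::real_normed_vector"
  assumes "bounded_bilinear prod" and u: "smooth_on S u" and w: "smooth_on S w" and "open S" "x \<in> S"
  shows "dR (\<lambda>x. prod (u x) (w x)) x = prod (u x) (dR w x) + prod (dR u x) (w x)"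
  using dR_eq_derivative[OF bounded_bilinear.FDERIV[OF assms(1)
      smooth_on_has_derivative[OF u assms(4,5)] smooth_on_has_derivative[OF w assms(4,5)]]]
    dR_eq_frechet_derivative[OF u assms(4,5)] dR_eq_frechet_derivative[OF w assms(4,5)] by simp

lemma dL_linear:
  assumes "bounded_linear L" and u: "smooth_on S u" and "open S" "x \<in> S"
  shows "dL (\<lambda>x. L (u x)) x = L (dL u x)"
  using dL_eq_derivative[OF bounded_linear.has_derivative[OF assms(1) smooth_on_has_derivative[OF u assms(3,4)]]]
    dL_eq_frechet_derivative[OF u assms(3,4)] by simp

lemma dR_linear:
  assumes "bounded_linear L" and u: "smooth_on S u" and "open S" "x \<in> S"
  shows "dR (\<lambda>x. L (u x)) x = L (dR u x)"
  using dR_eq_derivative[OF bounded_linear.has_derivative[OF assms(1) smooth_on_has_derivative[OF u assms(3,4)]]]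
    dR_eq_frechet_derivative[OF u assms(3,4)] by simp

lemma dL_add:
  assumes u: "smooth_on S u" and w: "smooth_on S w" and "open S" "x \<in> S"
  shows "dL (\<lambda>x. u x + w x) x = dL u x + dL w x"
  using dL_eq_derivative[OF has_derivative_add[OF
      smooth_on_has_derivative[OF u assms(3,4)] smooth_on_has_derivative[OF w assms(3,4)]]]
    dL_eq_frechet_derivative[OF u assms(3,4)] dL_eq_frechet_derivative[OF w assms(3,4)] by simp

lemma dR_add:
  assumes u: "smooth_on S u" and w: "smooth_on S w" and "open S" "x \<in> S"
  shows "dR (\<lambda>x. u x + w x) x = dR u x + dR w x"
  using dR_eq_derivative[OF has_derivative_add[OF
      smooth_on_has_derivative[OF u assms(3,4)] smooth_on_has_derivative[OF w assms(3,4)]]]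
    dR_eq_frechet_derivative[OF u assms(3,4)] dR_eq_frechet_derivative[OF w assms(3,4)] by simp

lemma dL_const: "dL (\<lambda>x. c) x = 0"
  by (simp add: dL_def d1_def d2_def)

lemma dR_const: "dR (\<lambda>x. c) x = 0"
  by (simp add: dR_def d1_def d2_def)

lemma dL_eq_0_if_constant_on: "open S \<Longrightarrow> x \<in> S \<Longrightarrow> (\<And>y. y \<in> S \<Longrightarrow> u y = c) \<Longrightarrow> dL u x = 0"
  using dL_cong[of S x u "\<lambda>_. c"] dL_const by simp

lemma dR_eq_0_if_constant_on: "open S \<Longrightarrow> x \<in> S \<Longrightarrow> (\<And>y. y \<in> S \<Longrightarrow> u y = c) \<Longrightarrow> dR u x = 0"
  using dR_cong[of S x u "\<lambda>_. c"] dR_const by simp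

lemma dL_bilinear_eq_0_if_constant_on:
  fixes prod :: "'b::real_normed_vector \<Rightarrow> 'c::real_normed_vector \<Rightarrow> 'd::real_normed_vector"
  assumes "bounded_bilinear prod" "smooth_on S u" "smooth_on S w" "open S" "x \<in> S"
    and "\<And>y. y \<in> S \<Longrightarrow> prod (u y) (w y) = c"
  shows "prod (u x) (dL w x) + prod (dL u x) (w x) = 0"
  using dL_bilinear[OF assms(1-5)] dL_eq_0_if_constant_on[OF assms(4-6)] by simp

lemma dR_bilinear_eq_0_if_constant_on:
  fixes prod :: "'b::real_normed_vector \<Rightarrow> 'c::real_normed_vector \<Rightarrow> 'd::real_normed_vector"
  assumes "bounded_bilinear prod" "smooth_on S u" "smooth_on S w" "open S" "x \<in> S"
    and "\<And>y. y \<in> S \<Longrightarrow> prod (u y) (w y) = c"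
  shows "prod (u x) (dR w x) + prod (dR u x) (w x) = 0"
  using dR_bilinear[OF assms(1-5)] dR_eq_0_if_constant_on[OF assms(4-6)] by simp

lemma dR_diff:
  assumes "smooth_on S u" "smooth_on S w" "open S" "x \<in> S"
  shows "dR (\<lambda>x. u x - w x) x = dR u x - dR w x"
  using dR_add[OF assms(1) smooth_on_minus[OF assms(3,2)] assms(3,4)]
    dR_linear[OF bounded_linear_minus[OF bounded_linear_ident] assms(2-4)] by simp

lemma dR_mult:
  fixes u w :: "real \<times> real \<Rightarrow> 'a::real_normed_algebra"
  assumes "smooth_on S u" "smooth_on S w" "open S" "x \<in> S"
  shows "dR (\<lambda>x. u x * w x) x = u x * dR w x + dR u x * w x"
  by (rule dR_bilinear[OF bounded_bilinear_mult assms])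

lemma dR_divide:
  fixes u w :: "real \<times> real \<Rightarrow> 'a::real_normed_field"
  assumes u: "smooth_on S u" and w: "smooth_on S w" and S: "open S" "x \<in> S" and "w x \<noteq> 0"
  shows "dR (\<lambda>x. u x / w x) x = (dR u x * w x - u x * dR w x) / (w x)\<^sup>2"
  using dR_eq_derivative[OF has_derivative_divide[OF smooth_on_has_derivative[OF u S]
        smooth_on_has_derivative[OF w S] \<open>w x \<noteq> 0\<close>]]
    dR_eq_frechet_derivative[OF u S] dR_eq_frechet_derivative[OF w S] \<open>w x \<noteq> 0\<close>
  by (simp add: field_simps power2_eq_square)

lemma dR_divide_sqrt:
  fixes u w :: "real \<times> real \<Rightarrow> real"
  assumes u: "smooth_on S u" and w: "smooth_on S w" and S: "open S" "x \<in> S" and "w x > 0"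
  shows "dR (\<lambda>x. u x / sqrt (w x)) x = (dR u x * w x - u x * dR w x / 2) / (w x * sqrt (w x))"
proof -
  have "((\<lambda>x. u x / sqrt (w x)) has_derivative (\<lambda>v. (frechet_derivative u (at x) v * w x
      - u x * frechet_derivative w (at x) v / 2) / (w x * sqrt (w x)))) (at x)"
    using \<open>w x > 0\<close>
    by (auto intro!: derivative_eq_intros smooth_on_has_derivative[OF u S] smooth_on_has_derivative[OF w S]
        simp: field_simps)
  then show ?thesis
    by (simp add: dR_eq_derivative dR_eq_frechet_derivative[OF u S] dR_eq_frechet_derivative[OF w S])
qed

lemma dL_ln:
  fixes u :: "real \<times> real \<Rightarrow> real"
  assumes u: "smooth_on S u" and S: "open S" "x \<in> S" and "u x > 0"
  shows "dL (\<lambda>x. ln (u x)) x = dL u x / u x"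
proof -
  have "((\<lambda>x. ln (u x)) has_derivative (\<lambda>v. frechet_derivative u (at x) v / u x)) (at x)"
    using \<open>u x > 0\<close>
    by (auto intro!: derivative_eq_intros smooth_on_has_derivative[OF u S] simp: field_simps)
  then show ?thesis by (simp add: dL_eq_derivative dL_eq_frechet_derivative[OF u S])
qed

lemma dL_dR_commute:
  assumes g: "smooth_on S g" and S: "open S" and x: "x \<in> S"
  shows "dL (dR g) x = dR (dL g) x"
proof -
  have "dL (dR g) x = dL (\<lambda>y. frechet_derivative g (at y) (1/2, -1/2)) x"
    by (rule dL_cong[OF S x]) (simp add: dR_eq_frechet_derivative[OF g S])
  also have "\<dots> = frechet_derivative (\<lambda>y. frechet_derivative g (at y) (1/2, 1/2)) (at x) (1/2, -1/2)"
    by (simp add: dL_eq_frechet_derivative[OF smooth_on_frechet_derivative[OF g] S x]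
        frechet_derivative_commute[OF S x g])
  also have "\<dots> = dR (\<lambda>y. frechet_derivative g (at y) (1/2, 1/2)) x"
    by (rule dR_eq_frechet_derivative[OF smooth_on_frechet_derivative[OF g] S x, symmetric])
  also have "\<dots> = dR (dL g) x"
    by (rule dR_cong[OF S x]) (simp add: dL_eq_frechet_derivative[OF g S])
  finally show ?thesis .
qed

section \<open>Hermitian 2 \<times> 2 matrices and the Bloch sphere\<close>

text \<open>\<open>pauli v\<close> is \<open>(v\<^sub>1 \<sigma>\<^sub>1 + v\<^sub>2 \<sigma>\<^sub>2 + v\<^sub>3 \<sigma>\<^sub>3) / 2\<close> for the Pauli matrices \<open>\<sigma>\<^sub>i\<close>, so that
  \<open>bloch_proj v\<close> is the projector onto the state with Bloch vector \<open>v\<close> when \<open>v\<close> is a unit vector.\<close>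

definition pauli :: "real^3 \<Rightarrow> complex^2^2" where
  "pauli v = (\<chi> i j. if i = 1 then (if j = 1 then of_real (v$3) / 2 else (of_real (v$1) - \<i> * of_real (v$2)) / 2)
                    else (if j = 1 then (of_real (v$1) + \<i> * of_real (v$2)) / 2 else - of_real (v$3) / 2))"

definition bloch_proj :: "real^3 \<Rightarrow> complex^2^2" where
  "bloch_proj v = cmat_scale (1/2) (mat 1) + pauli v"

definition bloch_vec :: "complex^2^2 \<Rightarrow> real^3" where
  "bloch_vec X = vector [Re (X$1$2 + X$2$1), Im (X$2$1 - X$1$2), Re (X$1$1 - X$2$2)]"

lemma pauli_nth:
  "pauli v $ 1 $ 1 = of_real (v$3) / 2" "pauli v $ 1 $ 2 = (of_real (v$1) - \<i> * of_real (v$2)) / 2"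
  "pauli v $ 2 $ 1 = (of_real (v$1) + \<i> * of_real (v$2)) / 2" "pauli v $ 2 $ 2 = - of_real (v$3) / 2"
  by (simp_all add: pauli_def)

lemma bloch_proj_nth:
  "bloch_proj v $ 1 $ 1 = (1 + of_real (v$3)) / 2" "bloch_proj v $ 1 $ 2 = (of_real (v$1) - \<i> * of_real (v$2)) / 2"
  "bloch_proj v $ 2 $ 1 = (of_real (v$1) + \<i> * of_real (v$2)) / 2" "bloch_proj v $ 2 $ 2 = (1 - of_real (v$3)) / 2"
  by (simp_all add: bloch_proj_def pauli_nth cmat_scale_def mat_def add_divide_distrib diff_divide_distrib)

lemma bloch_vec_nth:
  "bloch_vec X $ 1 = Re (X$1$2 + X$2$1)" "bloch_vec X $ 2 = Im (X$2$1 - X$1$2)"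
  "bloch_vec X $ 3 = Re (X$1$1 - X$2$2)"
  by (simp_all add: bloch_vec_def)

lemma vec2_eq_iff: "(u::'a^2) = w \<longleftrightarrow> u$1 = w$1 \<and> u$2 = w$2"
  by (auto simp: vec_eq_iff forall_2)

lemma mat2_eq_iff: "(A::'a^2^2) = B \<longleftrightarrow> A$1$1 = B$1$1 \<and> A$1$2 = B$1$2 \<and> A$2$1 = B$2$1 \<and> A$2$2 = B$2$2"
  by (auto simp: vec_eq_iff forall_2)

lemma vec3_eq_iff: "(a::real^3) = b \<longleftrightarrow> a$1 = b$1 \<and> a$2 = b$2 \<and> a$3 = b$3"
  by (auto simp: vec_eq_iff forall_3)

lemma inner_vec3: "(a::real^3) \<bullet> b = a$1 * b$1 + a$2 * b$2 + a$3 * b$3"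
  by (simp add: inner_vec_def sum_3)

lemma matrix_matrix_mult_2: "((A::'a::semiring_1^2^2) ** B) $ i $ j = A$i$1 * B$1$j + A$i$2 * B$2$j"
  by (simp add: matrix_matrix_mult_def sum_2)

lemma matrix_vector_mult_2: "((A::'a::semiring_1^2^2) *v v) $ i = A$i$1 * v$1 + A$i$2 * v$2"
  by (simp add: matrix_vector_mult_def sum_2)

lemma herm_2: "herm u v = cnj (u$1) * v$1 + cnj (u$2) * v$2"
  by (simp add: herm_def sum_2)

lemma herm_self: "herm v v = of_real ((cmod (v$1))\<^sup>2 + (cmod (v$2))\<^sup>2)"
  by (simp add: herm_2 complex_eq_iff cmod_def power2_eq_square)

lemma herm_self_pos:
  assumes "(v::complex^2) \<noteq> 0"
  shows "(cmod (v$1))\<^sup>2 + (cmod (v$2))\<^sup>2 > 0"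
proof -
  have "v$1 \<noteq> 0 \<or> v$2 \<noteq> 0" using assms by (auto simp: vec_eq_iff forall_2)
  then show ?thesis by (auto simp: add_pos_nonneg add_nonneg_pos)
qed

lemma herm_self_neq_0: "(v::complex^2) \<noteq> 0 \<Longrightarrow> herm v v \<noteq> 0"
  unfolding herm_self using herm_self_pos by (metis less_irrefl of_real_eq_0_iff)

lemma bloch_vec_pauli: "bloch_vec (pauli v) = v"
  by (simp add: vec3_eq_iff bloch_vec_nth pauli_nth)

lemma bounded_linear_pauli: "bounded_linear pauli"
  unfolding linear_conv_bounded_linear[symmetric]
  by (auto intro!: linearI simp: mat2_eq_iff pauli_nth scaleR_conv_of_real[where 'a=complex] algebra_simps
      add_divide_distrib diff_divide_distrib)

lemma bounded_linear_bloch_vec: "bounded_linear bloch_vec"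
  unfolding linear_conv_bounded_linear[symmetric]
  by (auto intro!: linearI simp: vec3_eq_iff bloch_vec_nth scaleR_conv_of_real[where 'a=complex] algebra_simps)

lemma bounded_bilinear_matrix_vector_mult:
  "bounded_bilinear (\<lambda>(A::complex^2^2) (v::complex^2). A *v v)"
  unfolding bilinear_conv_bounded_bilinear[symmetric] bilinear_def
  by (auto intro!: linearI simp: vec2_eq_iff matrix_vector_mult_2 scaleR_conv_of_real[where 'a=complex] algebra_simps)

lemma matrix_vector_mult_minus_right: "(A::complex^2^2) *v (- u) = - (A *v u)"
  by (simp add: vec2_eq_iff matrix_vector_mult_2 algebra_simps)

lemma matrix_vector_mult_cvec_scale: "(A::complex^2^2) *v cvec_scale c w = cvec_scale c (A *v w)"
  by (simp add: vec2_eq_iff matrix_vector_mult_2 cvec_scale_def algebra_simps)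

lemma cvec_scale_cvec_scale: "cvec_scale a (cvec_scale b w) = cvec_scale (a * b) w"
  by (simp add: vec2_eq_iff cvec_scale_def)

lemma cvec_scale_add_right: "cvec_scale a (u + w) = cvec_scale a u + cvec_scale a w"
  by (simp add: vec2_eq_iff cvec_scale_def algebra_simps)

lemma cvec_scale_minus_right: "cvec_scale a (- w) = - cvec_scale a w"
  by (simp add: vec2_eq_iff cvec_scale_def)

lemma matrix_mult_cmat_scale_outer:
  "(A::complex^2^2) ** cmat_scale c (outer u w) = cmat_scale c (outer (A *v u) w)"
  by (simp add: mat2_eq_iff matrix_matrix_mult_2 matrix_vector_mult_2 cmat_scale_def outer_def
      algebra_simps)

lemma proj_nth: "proj v $ i $ j = (if i = j then 1 else 0) - v$i * cnj (v$j) / herm v v"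
  by (simp add: proj_def cmat_scale_def outer_def mat_def)

lemma proj_mult_vec: "proj v *v w = w - cvec_scale (herm v w / herm v v) v"
  by (simp add: vec2_eq_iff matrix_vector_mult_2 proj_nth cvec_scale_def herm_2 algebra_simps
      add_divide_distrib)

lemma bloch_proj_bloch_vec_proj:
  assumes "v \<noteq> 0"
  shows "bloch_proj (bloch_vec (proj v)) = proj v"
proof -
  define r where "r = (cmod (v$1))\<^sup>2 + (cmod (v$2))\<^sup>2"
  have r: "r > 0" "herm v v = of_real r" unfolding r_def using herm_self_pos[OF assms] herm_self by auto
  have sq: "z * cnj z = of_real ((cmod z)\<^sup>2)" for z by (metis complex_norm_square)
  have "proj v $ 1 $ 1 + proj v $ 2 $ 2 = 2 - (v$1 * cnj (v$1) + v$2 * cnj (v$2)) / herm v v"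
    by (simp add: proj_nth add_divide_distrib)
  also have "v$1 * cnj (v$1) + v$2 * cnj (v$2) = herm v v" unfolding sq r r_def by simp
  finally have "proj v $ 1 $ 1 + proj v $ 2 $ 2 = 1" using r by simp
  moreover have "Im (proj v $ i $ i) = 0" for i
    unfolding proj_nth r(2) by (simp add: sq)
  moreover have "proj v $ 2 $ 1 = cnj (proj v $ 1 $ 2)" unfolding proj_nth r(2) by simp
  ultimately show ?thesis
    by (auto simp: mat2_eq_iff bloch_proj_nth bloch_vec_nth complex_eq_iff)
qed

lemma bloch_vec_proj_unit:
  assumes "v \<noteq> 0"
  shows "bloch_vec (proj v) \<bullet> bloch_vec (proj v) = 1"
proof -
  obtain a1 b1 a2 b2 where v: "v$1 = Complex a1 b1" "v$2 = Complex a2 b2"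
    by (metis complex.exhaust)
  define r where "r = a1\<^sup>2 + b1\<^sup>2 + a2\<^sup>2 + b2\<^sup>2"
  have r: "r > 0" "herm v v = of_real r"
    using herm_self_pos[OF assms] herm_self[of v] by (simp_all add: r_def v cmod_def)
  have "bloch_vec (proj v) = vector [-2 * (a1 * a2 + b1 * b2) / r, 2 * (b1 * a2 - a1 * b2) / r,
      (a2\<^sup>2 + b2\<^sup>2 - a1\<^sup>2 - b1\<^sup>2) / r]"
    using r by (simp add: vec3_eq_iff bloch_vec_nth proj_nth v Re_divide Im_divide field_simps
        power2_eq_square)
  moreover have "(-2 * (a1 * a2 + b1 * b2))\<^sup>2 + (2 * (b1 * a2 - a1 * b2))\<^sup>2 + (a2\<^sup>2 + b2\<^sup>2 - a1\<^sup>2 - b1\<^sup>2)\<^sup>2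
      = r\<^sup>2"
    unfolding r_def by algebra
  ultimately show ?thesis
    using r by (simp add: inner_vec3 power2_eq_square add_divide_distrib[symmetric])
qed

lemma comm_pauli: "comm (pauli a) (pauli b) = cmat_scale \<i> (pauli (cross3 a b))"
  by (simp add: mat2_eq_iff comm_def cmat_scale_def matrix_matrix_mult_2 pauli_nth cross_components
      complex_eq_iff field_simps)

lemma comm_bloch_proj: "comm A (bloch_proj n) = comm A (pauli n)"
  by (simp add: mat2_eq_iff comm_def bloch_proj_def matrix_matrix_mult_2 cmat_scale_def mat_def
      algebra_simps)

lemma su2_inner_i_pauli: "su2_inner (cmat_scale \<i> (pauli u)) (cmat_scale \<i> (pauli w)) = (u \<bullet> w) / 4"
  by (simp add: su2_inner_def sum_2 inner_vec3 matrix_matrix_mult_2 cmat_scale_def pauli_nth algebra_simps)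

lemma su2_inner_minus_left: "su2_inner (- A) B = - su2_inner A B"
  by (simp add: su2_inner_def matrix_matrix_mult_2 sum_2 algebra_simps)

lemma su2_inner_minus_right: "su2_inner A (- B) = - su2_inner A B"
  by (simp add: su2_inner_def matrix_matrix_mult_2 sum_2 algebra_simps)

lemma inner_cross3_cross3: "cross3 a b \<bullet> cross3 c d = (a \<bullet> c) * (b \<bullet> d) - (a \<bullet> d) * (b \<bullet> c)"
  unfolding inner_vec3 cross_components by algebra

lemma bloch_proj_idem: "n \<bullet> n = 1 \<Longrightarrow> bloch_proj n ** bloch_proj n = bloch_proj n"
  unfolding inner_vec3 mat2_eq_iff
  by (simp add: matrix_matrix_mult_2 bloch_proj_nth complex_eq_iff field_simps)

lemma bloch_proj_pauli_bloch_proj: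
  "n \<bullet> n = 1 \<Longrightarrow> n \<bullet> b = 0 \<Longrightarrow> bloch_proj n ** pauli b ** bloch_proj n = 0"
  unfolding inner_vec3 mat2_eq_iff
  by (simp add: matrix_matrix_mult_2 bloch_proj_nth pauli_nth complex_eq_iff field_simps) algebra

lemma cross3_eq_0_if_bloch_proj_pauli_complement:
  assumes "bloch_proj n ** pauli e ** (mat 1 - bloch_proj n) = 0"
  shows "cross3 n e = 0"
proof -
  let ?X = "bloch_proj n ** pauli e ** (mat 1 - bloch_proj n)"
  let ?Y = "(mat 1 - bloch_proj n) ** pauli e ** bloch_proj n"
  \<comment> \<open>\<open>?Y\<close> is the adjoint of \<open>?X\<close>, and \<open>?X - ?Y = i pauli (n \<times> e)\<close>.\<close>
  have "?Y $ i $ j = cnj (?X $ j $ i)" for i j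
  proof -
    have "i \<in> {1, 2}" "j \<in> {1, 2}" using exhaust_2 by auto
    then show ?thesis
      by (auto simp: matrix_matrix_mult_2 bloch_proj_nth pauli_nth mat_def complex_eq_iff field_simps)
  qed
  then have "?Y = 0" using assms by (simp add: vec_eq_iff)
  moreover have "?X - ?Y = cmat_scale \<i> (pauli (cross3 n e))"
    by (simp add: mat2_eq_iff cmat_scale_def matrix_matrix_mult_2 bloch_proj_nth pauli_nth mat_def
        cross_components complex_eq_iff field_simps)
  ultimately have "cmat_scale \<i> (pauli (cross3 n e)) = 0" using assms by simp
  then have "pauli (cross3 n e) = 0" by (simp add: mat2_eq_iff cmat_scale_def)
  then show ?thesis using bloch_vec_pauli[of "cross3 n e"] bloch_vec_pauli[of 0]
    by (simp add: linear_0[OF bounded_linear.linear[OF bounded_linear_pauli]])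
qed

section \<open>Gram identities in \<open>\<real>\<^sup>3\<close>\<close>

lemma gram_inner_identity:
  fixes a b u v :: "real^3"
  shows "(cross3 a b \<bullet> cross3 a b) * (u \<bullet> v) = (u \<bullet> cross3 a b) * (v \<bullet> cross3 a b)
    + ((u \<bullet> a) * (b \<bullet> b) - (u \<bullet> b) * (a \<bullet> b)) * (v \<bullet> a)
    + ((u \<bullet> b) * (a \<bullet> a) - (u \<bullet> a) * (a \<bullet> b)) * (v \<bullet> b)"
  unfolding inner_vec3 cross_components by algebra

lemma inner_cross3_eq_0_if_common_normal:
  fixes n a b u :: "real^3"
  assumes "n \<bullet> n = 1" "n \<bullet> a = 0" "n \<bullet> b = 0" "n \<bullet> u = 0"
  shows "u \<bullet> cross3 a b = 0"
proof -
  have "cross3 n (cross3 a b) = 0" using assms(2,3) by (simp add: Lagrange)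
  then have "cross3 a b = (n \<bullet> cross3 a b) *\<^sub>R n"
    using Lagrange[of n n "cross3 a b"] assms(1) by simp
  then show ?thesis using assms(4) by (metis inner_commute inner_scaleR_right mult_zero_right)
qed

text \<open>The hypotheses are those satisfied by \<open>\<nu>, \<nu>\<^sub>L, \<nu>\<^sub>R, \<nu>\<^sub>L\<^sub>L, \<nu>\<^sub>R\<^sub>R\<close>; the proof expands
  the components \<open>u\<close>, \<open>v\<close> of \<open>c\<close>, \<open>d\<close> orthogonal to \<open>n\<close> in the frame \<open>a, b, a \<times> b\<close>.\<close>

lemma gram_identity_tangent:
  fixes n a b c d :: "real^3"
  assumes n: "n \<bullet> n = 1" and a: "n \<bullet> a = 0" and b: "n \<bullet> b = 0"
    and c: "n \<bullet> c = - (a \<bullet> a)" and d: "n \<bullet> d = - (b \<bullet> b)"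
  shows "((a \<bullet> a) * (b \<bullet> b) - (a \<bullet> b)\<^sup>2) * ((c \<bullet> d) - (a \<bullet> a) * (b \<bullet> b))
    = ((a \<bullet> c) * (b \<bullet> b) - (c \<bullet> b) * (a \<bullet> b)) * (a \<bullet> d)
    + ((c \<bullet> b) * (a \<bullet> a) - (a \<bullet> c) * (a \<bullet> b)) * (b \<bullet> d)"
proof -
  define u v where "u = c + (a \<bullet> a) *\<^sub>R n" and "v = d + (b \<bullet> b) *\<^sub>R n"
  have u: "n \<bullet> u = 0" and v: "n \<bullet> v = 0" using n c d by (simp_all add: u_def v_def inner_add_right)
  have cn: "c \<bullet> n = - (a \<bullet> a)" and dn: "d \<bullet> n = - (b \<bullet> b)" using c d by (simp_all add: inner_commute)
  have uv: "c \<bullet> d = u \<bullet> v + (a \<bullet> a) * (b \<bullet> b)" "a \<bullet> c = u \<bullet> a" "c \<bullet> b = u \<bullet> b"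
    "a \<bullet> d = v \<bullet> a" "b \<bullet> d = v \<bullet> b"
    using n a b by (simp_all add: u_def v_def inner_add_left inner_add_right inner_commute cn dn)
  have gram: "cross3 a b \<bullet> cross3 a b = (a \<bullet> a) * (b \<bullet> b) - (a \<bullet> b)\<^sup>2"
    by (simp add: inner_cross3_cross3 power2_eq_square inner_commute)
  have "u \<bullet> cross3 a b = 0" "v \<bullet> cross3 a b = 0"
    using inner_cross3_eq_0_if_common_normal[OF n a b] u v by blast+
  with gram_inner_identity[of a b u v] show ?thesis
    unfolding uv gram by (simp add: algebra_simps)
qed

section \<open>Solutions as maps into the sphere\<close>

locale CP1_solution =
  fixes \<Omega> :: "(real \<times> real) set" and f :: "real \<times> real \<Rightarrow> complex^2"
  assumes open_\<Omega>: "open \<Omega>" and f_nonzero: "\<And>x. x \<in> \<Omega> \<Longrightarrow> f x \<noteq> 0"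
    and smooth_f: "smooth_on \<Omega> f" and EL: "\<And>x. x \<in> \<Omega> \<Longrightarrow> CP1_EL f x"
begin

definition \<nu> :: "real \<times> real \<Rightarrow> real^3" where
  "\<nu> z = bloch_vec (Pf f z)"

lemma smooth_on_Pf: "smooth_on \<Omega> (Pf f)"
proof -
  have "Pf f = (\<lambda>z. \<chi> i j. (if i = j then 1 else 0) - f z $ i * cnj (f z $ j) / herm (f z) (f z))"
    by (simp add: fun_eq_iff vec_eq_iff Pf_def proj_nth)
  moreover have "smooth_on \<Omega> (\<lambda>z. herm (f z) (f z))"
    unfolding herm_2 by (intro smooth_on_add smooth_on_mult smooth_on_cnj smooth_on_vec_nth smooth_f open_\<Omega>)
  ultimately show ?thesis
    by (simp only:) (intro smooth_on_vec_lambda smooth_on_diff smooth_on_divide smooth_on_mult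
        smooth_on_cnj smooth_on_vec_nth smooth_on_const smooth_f open_\<Omega> herm_self_neq_0 f_nonzero)
qed

lemma smooth_on_\<nu>: "smooth_on \<Omega> \<nu>"
  unfolding \<nu>_def[abs_def] by (rule smooth_on_linear[OF bounded_linear_bloch_vec open_\<Omega> smooth_on_Pf])

lemmas smooth_on_\<nu>_derivatives =
  smooth_on_dL[OF smooth_on_\<nu> open_\<Omega>] smooth_on_dR[OF smooth_on_\<nu> open_\<Omega>]
  smooth_on_dL[OF smooth_on_dL[OF smooth_on_\<nu> open_\<Omega>] open_\<Omega>]
  smooth_on_dR[OF smooth_on_dR[OF smooth_on_\<nu> open_\<Omega>] open_\<Omega>]

lemma Pf_eq_bloch_proj: "z \<in> \<Omega> \<Longrightarrow> Pf f z = bloch_proj (\<nu> z)"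
  unfolding \<nu>_def Pf_def using bloch_proj_bloch_vec_proj f_nonzero by metis

lemma \<nu>_unit: "z \<in> \<Omega> \<Longrightarrow> \<nu> z \<bullet> \<nu> z = 1"
  unfolding \<nu>_def Pf_def using bloch_vec_proj_unit f_nonzero by metis

lemma Pf_idem: "z \<in> \<Omega> \<Longrightarrow> Pf f z ** Pf f z = Pf f z"
  by (simp add: Pf_eq_bloch_proj bloch_proj_idem \<nu>_unit)

lemma dL_Pf: assumes z: "z \<in> \<Omega>" shows "dL (Pf f) z = pauli (dL \<nu> z)"
proof -
  have "dL (Pf f) z = dL (\<lambda>y. cmat_scale (1/2) (mat 1) + pauli (\<nu> y)) z"
    by (rule dL_cong[OF open_\<Omega> z]) (simp add: Pf_eq_bloch_proj bloch_proj_def)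
  also have "\<dots> = pauli (dL \<nu> z)"
    by (simp add: dL_add[OF smooth_on_const smooth_on_linear[OF bounded_linear_pauli open_\<Omega> smooth_on_\<nu>]
          open_\<Omega> z] dL_const dL_linear[OF bounded_linear_pauli smooth_on_\<nu> open_\<Omega> z])
  finally show ?thesis .
qed

lemma dR_Pf: assumes z: "z \<in> \<Omega>" shows "dR (Pf f) z = pauli (dR \<nu> z)"
proof -
  have "dR (Pf f) z = dR (\<lambda>y. cmat_scale (1/2) (mat 1) + pauli (\<nu> y)) z"
    by (rule dR_cong[OF open_\<Omega> z]) (simp add: Pf_eq_bloch_proj bloch_proj_def)
  also have "\<dots> = pauli (dR \<nu> z)"
    by (simp add: dR_add[OF smooth_on_const smooth_on_linear[OF bounded_linear_pauli open_\<Omega> smooth_on_\<nu>]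
          open_\<Omega> z] dR_const dR_linear[OF bounded_linear_pauli smooth_on_\<nu> open_\<Omega> z])
  finally show ?thesis .
qed

lemma dL_dR_Pf: assumes z: "z \<in> \<Omega>" shows "dL (dR (Pf f)) z = pauli (dL (dR \<nu>) z)"
proof -
  have "dL (dR (Pf f)) z = dL (\<lambda>y. pauli (dR \<nu> y)) z"
    by (rule dL_cong[OF open_\<Omega> z]) (simp add: dR_Pf)
  also have "\<dots> = pauli (dL (dR \<nu>) z)"
    by (rule dL_linear[OF bounded_linear_pauli smooth_on_\<nu>_derivatives(2) open_\<Omega> z])
  finally show ?thesis .
qed

lemma \<nu>_orth_dL: "z \<in> \<Omega> \<Longrightarrow> \<nu> z \<bullet> dL \<nu> z = 0"
  using dL_bilinear_eq_0_if_constant_on[OF bounded_bilinear_inner smooth_on_\<nu> smooth_on_\<nu> open_\<Omega> _ \<nu>_unit]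
  by (simp add: inner_commute)

lemma \<nu>_orth_dR: "z \<in> \<Omega> \<Longrightarrow> \<nu> z \<bullet> dR \<nu> z = 0"
  using dR_bilinear_eq_0_if_constant_on[OF bounded_bilinear_inner smooth_on_\<nu> smooth_on_\<nu> open_\<Omega> _ \<nu>_unit]
  by (simp add: inner_commute)

lemma \<nu>_inner_dL_dL: "z \<in> \<Omega> \<Longrightarrow> \<nu> z \<bullet> dL (dL \<nu>) z = - (dL \<nu> z \<bullet> dL \<nu> z)"
  using dL_bilinear_eq_0_if_constant_on[OF bounded_bilinear_inner smooth_on_\<nu>
      smooth_on_\<nu>_derivatives(1) open_\<Omega> _ \<nu>_orth_dL]
  by (simp add: eq_neg_iff_add_eq_0)

lemma \<nu>_inner_dR_dR: "z \<in> \<Omega> \<Longrightarrow> \<nu> z \<bullet> dR (dR \<nu>) z = - (dR \<nu> z \<bullet> dR \<nu> z)"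
  using dR_bilinear_eq_0_if_constant_on[OF bounded_bilinear_inner smooth_on_\<nu>
      smooth_on_\<nu>_derivatives(2) open_\<Omega> _ \<nu>_orth_dR]
  by (simp add: eq_neg_iff_add_eq_0)

lemma \<nu>_inner_dL_dR: "z \<in> \<Omega> \<Longrightarrow> \<nu> z \<bullet> dL (dR \<nu>) z = - (dL \<nu> z \<bullet> dR \<nu> z)"
  using dL_bilinear_eq_0_if_constant_on[OF bounded_bilinear_inner smooth_on_\<nu>
      smooth_on_\<nu>_derivatives(2) open_\<Omega> _ \<nu>_orth_dR]
  by (simp add: eq_neg_iff_add_eq_0)

lemma Pf_mult_f: "z \<in> \<Omega> \<Longrightarrow> Pf f z *v f z = 0"
  using herm_self_neq_0[OF f_nonzero] by (simp add: Pf_def proj_mult_vec vec2_eq_iff cvec_scale_def)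

lemma dL_Pf_mult_f: "z \<in> \<Omega> \<Longrightarrow> dL (Pf f) z *v f z = - (Pf f z *v dL f z)"
  using dL_bilinear_eq_0_if_constant_on[OF bounded_bilinear_matrix_vector_mult smooth_on_Pf smooth_f
      open_\<Omega> _ Pf_mult_f]
  by (simp add: eq_neg_iff_add_eq_0 add.commute)

lemma dR_Pf_mult_f: "z \<in> \<Omega> \<Longrightarrow> dR (Pf f) z *v f z = - (Pf f z *v dR f z)"
  using dR_bilinear_eq_0_if_constant_on[OF bounded_bilinear_matrix_vector_mult smooth_on_Pf smooth_f
      open_\<Omega> _ Pf_mult_f]
  by (simp add: eq_neg_iff_add_eq_0 add.commute)

lemma dL_dR_Pf_mult_f:
  assumes z: "z \<in> \<Omega>"
  shows "dL (dR (Pf f)) z *v f z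
    = - (Pf f z *v dL (dR f) z + dL (Pf f) z *v dR f z + dR (Pf f) z *v dL f z)"
proof -
  note mv = bounded_bilinear_matrix_vector_mult
  note sm = smooth_on_Pf smooth_on_dR[OF smooth_on_Pf open_\<Omega>] smooth_f smooth_on_dR[OF smooth_f open_\<Omega>]
  have "dL (\<lambda>y. Pf f y *v dR f y + dR (Pf f) y *v f y) z = 0"
    by (rule dL_eq_0_if_constant_on[OF open_\<Omega> z]) (simp add: dR_Pf_mult_f)
  moreover have "dL (\<lambda>y. Pf f y *v dR f y + dR (Pf f) y *v f y) z
      = dL (\<lambda>y. Pf f y *v dR f y) z + dL (\<lambda>y. dR (Pf f) y *v f y) z"
    using dL_add[OF smooth_on_bilinear[OF mv open_\<Omega> sm(1,4)] smooth_on_bilinear[OF mv open_\<Omega> sm(2,3)] open_\<Omega> z]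
    by simp
  ultimately show ?thesis
    using dL_bilinear[OF mv sm(1,4) open_\<Omega> z] dL_bilinear[OF mv sm(2,3) open_\<Omega> z]
    by (simp add: eq_neg_iff_add_eq_0 algebra_simps)
qed

lemma Pf_dL_Pf_mult:
  assumes z: "z \<in> \<Omega>"
  shows "Pf f z *v (dL (Pf f) z *v w) = - cvec_scale (herm (f z) w / herm (f z) (f z)) (Pf f z *v dL f z)"
proof -
  let ?P = "Pf f z" and ?c = "herm (f z) w / herm (f z) (f z)"
  \<comment> \<open>only the component of \<open>w\<close> along \<open>f z\<close> survives, as \<open>P (\<partial>\<^sub>L P) P = 0\<close>\<close>
  have "?P *v w = w - cvec_scale ?c (f z)" by (simp add: Pf_def proj_mult_vec)
  then have "w = cvec_scale ?c (f z) + ?P *v w" by simp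
  then have "?P *v (dL (Pf f) z *v w)
      = cvec_scale ?c (?P *v (dL (Pf f) z *v f z)) + (?P ** dL (Pf f) z ** ?P) *v w"
    by (metis matrix_vector_right_distrib matrix_vector_mult_cvec_scale matrix_vector_mul_assoc)
  also have "?P ** dL (Pf f) z ** ?P = 0"
    by (simp add: z Pf_eq_bloch_proj dL_Pf bloch_proj_pauli_bloch_proj \<nu>_unit \<nu>_orth_dL)
  finally show ?thesis
    by (simp add: z dL_Pf_mult_f matrix_vector_mult_minus_right matrix_vector_mul_assoc Pf_idem
        cvec_scale_minus_right)
qed

lemma Pf_dR_Pf_mult:
  assumes z: "z \<in> \<Omega>"
  shows "Pf f z *v (dR (Pf f) z *v w) = - cvec_scale (herm (f z) w / herm (f z) (f z)) (Pf f z *v dR f z)"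
proof -
  let ?P = "Pf f z" and ?c = "herm (f z) w / herm (f z) (f z)"
  have "?P *v w = w - cvec_scale ?c (f z)" by (simp add: Pf_def proj_mult_vec)
  then have "w = cvec_scale ?c (f z) + ?P *v w" by simp
  then have "?P *v (dR (Pf f) z *v w)
      = cvec_scale ?c (?P *v (dR (Pf f) z *v f z)) + (?P ** dR (Pf f) z ** ?P) *v w"
    by (metis matrix_vector_right_distrib matrix_vector_mult_cvec_scale matrix_vector_mul_assoc)
  also have "?P ** dR (Pf f) z ** ?P = 0"
    by (simp add: z Pf_eq_bloch_proj dR_Pf bloch_proj_pauli_bloch_proj \<nu>_unit \<nu>_orth_dR)
  finally show ?thesis
    by (simp add: z dR_Pf_mult_f matrix_vector_mult_minus_right matrix_vector_mul_assoc Pf_idem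
        cvec_scale_minus_right)
qed

lemma Pf_dL_dR_Pf_mult_f:
  assumes z: "z \<in> \<Omega>"
  shows "Pf f z *v (dL (dR (Pf f)) z *v f z) = 0"
proof -
  let ?P = "Pf f z" and ?s = "herm (f z) (f z)"
  let ?\<alpha> = "herm (f z) (dR f z) / ?s" and ?\<beta> = "herm (f z) (dL f z) / ?s"
  have "?P *v dL (dR f) z = ?P *v (cvec_scale (1 / ?s)
      (cvec_scale (herm (f z) (dR f z)) (dL f z) + cvec_scale (herm (f z) (dL f z)) (dR f z)))"
    using EL[OF z] by (simp add: CP1_EL_def Pf_def matrix_vector_mult_diff_distrib)
  then have EL': "?P *v dL (dR f) z = cvec_scale ?\<alpha> (?P *v dL f z) + cvec_scale ?\<beta> (?P *v dR f z)"
    by (simp add: cvec_scale_add_right cvec_scale_cvec_scale matrix_vector_right_distrib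
        matrix_vector_mult_cvec_scale)
  have "?P *v (dL (dR (Pf f)) z *v f z)
      = - (?P *v dL (dR f) z + ?P *v (dL (Pf f) z *v dR f z) + ?P *v (dR (Pf f) z *v dL f z))"
    by (simp add: z dL_dR_Pf_mult_f matrix_vector_mult_minus_right matrix_vector_right_distrib
        matrix_vector_mult_diff_distrib matrix_vector_mul_assoc Pf_idem)
  then show ?thesis
    by (simp add: EL' Pf_dL_Pf_mult[OF z] Pf_dR_Pf_mult[OF z])
qed

lemma dL_dR_\<nu>:
  assumes z: "z \<in> \<Omega>"
  shows "dL (dR \<nu>) z = - (dL \<nu> z \<bullet> dR \<nu> z) *\<^sub>R \<nu> z"
proof -
  let ?P = "Pf f z"
  have "mat 1 - ?P = cmat_scale (1 / herm (f z) (f z)) (outer (f z) (f z))"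
    by (simp add: Pf_def proj_def)
  then have "?P ** dL (dR (Pf f)) z ** (mat 1 - ?P)
      = cmat_scale (1 / herm (f z) (f z)) (outer (?P *v (dL (dR (Pf f)) z *v f z)) (f z))"
    by (simp add: matrix_mult_cmat_scale_outer matrix_vector_mul_assoc)
  also have "\<dots> = 0"
    by (simp add: z Pf_dL_dR_Pf_mult_f mat2_eq_iff cmat_scale_def outer_def)
  finally have "?P ** dL (dR (Pf f)) z ** (mat 1 - ?P) = 0" .
  then have "cross3 (\<nu> z) (dL (dR \<nu>) z) = 0"
    by (intro cross3_eq_0_if_bloch_proj_pauli_complement) (simp add: z Pf_eq_bloch_proj dL_dR_Pf)
  moreover have "cross3 (\<nu> z) (cross3 (\<nu> z) (dL (dR \<nu>) z))
      = (\<nu> z \<bullet> dL (dR \<nu>) z) *\<^sub>R \<nu> z - (\<nu> z \<bullet> \<nu> z) *\<^sub>R dL (dR \<nu>) z"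
    by (rule Lagrange)
  ultimately show ?thesis by (simp add: z \<nu>_unit \<nu>_inner_dL_dR)
qed

lemma dR_dL_\<nu>: "z \<in> \<Omega> \<Longrightarrow> dR (dL \<nu>) z = - (dL \<nu> z \<bullet> dR \<nu> z) *\<^sub>R \<nu> z"
  using dL_dR_commute[OF smooth_on_\<nu> open_\<Omega>] dL_dR_\<nu> by metis

lemma dLX_eq: "z \<in> \<Omega> \<Longrightarrow> dLX f z = cmat_scale \<i> (pauli (cross3 (dL \<nu> z) (\<nu> z)))"
  by (simp add: dLX_def dL_Pf Pf_eq_bloch_proj comm_bloch_proj comm_pauli)

lemma dRX_eq: "z \<in> \<Omega> \<Longrightarrow> dRX f z = - cmat_scale \<i> (pauli (cross3 (dR \<nu> z) (\<nu> z)))"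
  by (simp add: dRX_def dR_Pf Pf_eq_bloch_proj comm_bloch_proj comm_pauli)

lemma G_LL_eq: "z \<in> \<Omega> \<Longrightarrow> G_LL f z = (dL \<nu> z \<bullet> dL \<nu> z) / 4"
  by (simp add: G_LL_def dLX_eq su2_inner_i_pauli inner_cross3_cross3 \<nu>_unit \<nu>_orth_dL inner_commute)

lemma G_RR_eq: "z \<in> \<Omega> \<Longrightarrow> G_RR f z = (dR \<nu> z \<bullet> dR \<nu> z) / 4"
  by (simp add: G_RR_def dRX_eq su2_inner_minus_left su2_inner_minus_right su2_inner_i_pauli
      inner_cross3_cross3 \<nu>_unit \<nu>_orth_dR inner_commute)

lemma G_LR_eq: "z \<in> \<Omega> \<Longrightarrow> G_LR f z = - (dL \<nu> z \<bullet> dR \<nu> z) / 4"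
  by (simp add: G_LR_def dLX_eq dRX_eq su2_inner_minus_right su2_inner_i_pauli inner_cross3_cross3
      \<nu>_unit \<nu>_orth_dL \<nu>_orth_dR inner_commute)


definition E :: "real \<times> real \<Rightarrow> real" where "E z = dL \<nu> z \<bullet> dL \<nu> z"
definition F :: "real \<times> real \<Rightarrow> real" where "F z = dL \<nu> z \<bullet> dR \<nu> z"
definition G :: "real \<times> real \<Rightarrow> real" where "G z = dR \<nu> z \<bullet> dR \<nu> z"

lemma smooth_on_EFG: "smooth_on \<Omega> E" "smooth_on \<Omega> F" "smooth_on \<Omega> G"
  unfolding E_def[abs_def] F_def[abs_def] G_def[abs_def]
  by (intro smooth_on_inner open_\<Omega> smooth_on_\<nu>_derivatives)+

lemma detG_eq: "z \<in> \<Omega> \<Longrightarrow> detG f z = (E z * G z - (F z)\<^sup>2) / 16"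
  by (simp add: detG_def G_LL_eq G_RR_eq G_LR_eq E_def F_def G_def power2_eq_square field_simps)

lemma dR_E: "z \<in> \<Omega> \<Longrightarrow> dR E z = 0"
  unfolding E_def[abs_def]
  by (simp add: dR_bilinear[OF bounded_bilinear_inner smooth_on_\<nu>_derivatives(1,1) open_\<Omega>] dR_dL_\<nu>
      \<nu>_orth_dL inner_commute)

lemma dR_dL_E: assumes z: "z \<in> \<Omega>" shows "dR (dL E) z = 0"
proof -
  have "dR (dL E) z = dL (dR E) z" using dL_dR_commute[OF smooth_on_EFG(1) open_\<Omega> z] by simp
  also have "\<dots> = 0" by (rule dL_eq_0_if_constant_on[OF open_\<Omega> z dR_E])
  finally show ?thesis .
qed

lemma dL_E: "z \<in> \<Omega> \<Longrightarrow> dL E z = 2 * (dL \<nu> z \<bullet> dL (dL \<nu>) z)"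
  unfolding E_def[abs_def]
  by (simp add: dL_bilinear[OF bounded_bilinear_inner smooth_on_\<nu>_derivatives(1,1) open_\<Omega>] inner_commute)

lemma dL_F: "z \<in> \<Omega> \<Longrightarrow> dL F z = dL (dL \<nu>) z \<bullet> dR \<nu> z"
  unfolding F_def[abs_def]
  by (simp add: dL_bilinear[OF bounded_bilinear_inner smooth_on_\<nu>_derivatives(1,2) open_\<Omega>] dL_dR_\<nu>
      \<nu>_orth_dL inner_commute)

lemma dR_F: "z \<in> \<Omega> \<Longrightarrow> dR F z = dL \<nu> z \<bullet> dR (dR \<nu>) z"
  unfolding F_def[abs_def]
  by (simp add: dR_bilinear[OF bounded_bilinear_inner smooth_on_\<nu>_derivatives(1,2) open_\<Omega>] dR_dL_\<nu>
      \<nu>_orth_dR inner_commute)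

lemma dR_G: "z \<in> \<Omega> \<Longrightarrow> dR G z = 2 * (dR \<nu> z \<bullet> dR (dR \<nu>) z)"
  unfolding G_def[abs_def]
  by (simp add: dR_bilinear[OF bounded_bilinear_inner smooth_on_\<nu>_derivatives(2,2) open_\<Omega>] inner_commute)

lemma dR_dL_dL_\<nu>:
  assumes z: "z \<in> \<Omega>"
  shows "dR (dL (dL \<nu>)) z = - (F z *\<^sub>R dL \<nu> z + dL F z *\<^sub>R \<nu> z)"
proof -
  have "dR (dL (dL \<nu>)) z = dL (\<lambda>y. (- F y) *\<^sub>R \<nu> y) z"
    using dL_dR_commute[OF smooth_on_\<nu>_derivatives(1) open_\<Omega> z] dL_cong[OF open_\<Omega> z, of "dR (dL \<nu>)"]
    by (simp add: dR_dL_\<nu> F_def)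
  also have "\<dots> = (- F z) *\<^sub>R dL \<nu> z + dL (\<lambda>y. - F y) z *\<^sub>R \<nu> z"
    by (rule dL_bilinear[OF bounded_bilinear_scaleR smooth_on_minus[OF open_\<Omega> smooth_on_EFG(2)]
          smooth_on_\<nu> open_\<Omega> z])
  also have "dL (\<lambda>y. - F y) z = - dL F z"
    by (rule dL_linear[OF bounded_linear_minus[OF bounded_linear_ident] smooth_on_EFG(2) open_\<Omega> z])
  finally show ?thesis by simp
qed

lemma dR_dL_F: "z \<in> \<Omega> \<Longrightarrow> dR (dL F) z = dL (dL \<nu>) z \<bullet> dR (dR \<nu>) z - (F z)\<^sup>2"
  using dR_cong[OF open_\<Omega> _ dL_F]
    dR_bilinear[OF bounded_bilinear_inner smooth_on_\<nu>_derivatives(3,2) open_\<Omega>]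
  by (simp add: dR_dL_dL_\<nu> \<nu>_orth_dR inner_diff_left power2_eq_square F_def)

end

section \<open>Gaussian curvature\<close>

lemma curvature_algebra:
  fixes E F G s1 s2 c b1 b2 :: real
  assumes "E > 0" "E * G - F\<^sup>2 > 0"
    and "(E * G - F\<^sup>2) * (c - E * G) = (s1 * G - s2 * F) * b1 + (s2 * E - s1 * F) * b2"
  defines "D \<equiv> (E * G - F\<^sup>2) / 16"
  shows "((b1 * (2 * s1) / (8 * E) - (c - F\<^sup>2) / 4) * D
      - (F * (2 * s1) / (8 * E) - s2 / 4) * ((E * (2 * b2) - 2 * F * b1) / 16) / 2) / D\<^sup>2 = -4"
proof -
  define Q where "Q = E * G - F\<^sup>2"
  have Q: "Q > 0" "D = Q / 16" using assms(2) by (simp_all add: Q_def D_def)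
  have c: "c = E * G + ((s1 * G - s2 * F) * b1 + (s2 * E - s1 * F) * b2) / Q"
    using assms(3) Q(1) unfolding Q_def by (simp add: field_simps)
  show ?thesis
    unfolding Q(2) c using assms(1) Q(1)
    by (simp add: field_simps power2_eq_square) (simp add: Q_def power2_eq_square algebra_simps)
qed

locale CP1_surface = CP1_solution +
  assumes detG_nonzero: "\<And>x. x \<in> \<Omega> \<Longrightarrow> detG f x \<noteq> 0"
begin

lemma detG_pos: "z \<in> \<Omega> \<Longrightarrow> detG f z > 0"
  using detG_eq[of z] detG_nonzero[of z] Cauchy_Schwarz_ineq[of "dL \<nu> z" "dR \<nu> z"]
  by (force simp: E_def F_def G_def)

lemma E_pos:
  assumes z: "z \<in> \<Omega>"
  shows "E z > 0"
proof -
  have "E z \<noteq> 0"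
  proof
    assume "E z = 0"
    then have "detG f z \<le> 0" by (simp add: detG_eq[OF z])
    then show False using detG_pos[OF z] by simp
  qed
  then show ?thesis by (simp add: E_def less_le)
qed

text \<open>The numerator \<open>\<partial>\<^sub>L G\<^sub>L\<^sub>R - G\<^sub>L\<^sub>R \<partial>\<^sub>L (ln G\<^sub>L\<^sub>L) / 2\<close> of the curvature formula.\<close>

definition curv_num :: "real \<times> real \<Rightarrow> real" where
  "curv_num y = F y * dL E y / (8 * E y) - dL F y / 4"

lemma smooth_on_curv_num: "smooth_on \<Omega> curv_num"
proof -
  have "8 * E y \<noteq> 0" if "y \<in> \<Omega>" for y using E_pos[OF that] by simp
  then show ?thesis
    unfolding curv_num_def[abs_def]
    by (intro smooth_on_diff smooth_on_divide smooth_on_mult smooth_on_const smooth_on_dL smooth_on_EFG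
        open_\<Omega>) auto
qed

lemma smooth_on_detG: "smooth_on \<Omega> (detG f)"
proof (rule smooth_on_cong[OF open_\<Omega> detG_eq[symmetric]])
  show "smooth_on \<Omega> (\<lambda>z. (E z * G z - (F z)\<^sup>2) / 16)"
    unfolding power2_eq_square
    by (intro smooth_on_divide smooth_on_diff smooth_on_mult smooth_on_const smooth_on_EFG open_\<Omega>) auto
qed

lemma gauss_curv_eq_quotient:
  assumes x: "x \<in> \<Omega>"
  shows "gauss_curv f x
    = (dR curv_num x * detG f x - curv_num x * dR (detG f) x / 2) / (detG f x)\<^sup>2"
proof -
  have integrand: "dL (G_LR f) y - 1/2 * G_LR f y * dL (\<lambda>z. ln (G_LL f z)) y = curv_num y"
    if y: "y \<in> \<Omega>" for y
  proof -
    have "dL (G_LR f) y = dL (\<lambda>z. F z * (- 1/4)) y"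
      by (rule dL_cong[OF open_\<Omega> y]) (simp add: G_LR_eq F_def)
    also have "\<dots> = dL F y * (- 1/4)"
      by (rule dL_linear[OF bounded_linear_mult_left smooth_on_EFG(2) open_\<Omega> y])
    finally have LR: "dL (G_LR f) y = dL F y * (- 1/4)" .
    have "dL (\<lambda>z. ln (G_LL f z)) y = dL (\<lambda>z. ln (E z / 4)) y"
      by (rule dL_cong[OF open_\<Omega> y]) (simp add: G_LL_eq E_def)
    also have "\<dots> = dL E y / E y"
      using dL_ln[OF smooth_on_linear[OF bounded_linear_divide open_\<Omega> smooth_on_EFG(1)] open_\<Omega> y]
        dL_linear[OF bounded_linear_divide smooth_on_EFG(1) open_\<Omega> y] E_pos[OF y]
      by simp
    finally show ?thesis using LR y by (simp add: curv_num_def G_LR_eq F_def field_simps)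
  qed
  have "dR (\<lambda>y. (dL (G_LR f) y - 1/2 * G_LR f y * dL (\<lambda>z. ln (G_LL f z)) y) / sqrt (detG f y)) x
      = dR (\<lambda>y. curv_num y / sqrt (detG f y)) x"
    using integrand by (intro dR_cong[OF open_\<Omega> x]) simp
  then have "gauss_curv f x = 1 / sqrt (detG f x) * dR (\<lambda>y. curv_num y / sqrt (detG f y)) x"
    unfolding gauss_curv_def by (rule arg_cong)
  also have "\<dots> = 1 / sqrt (detG f x) * ((dR curv_num x * detG f x - curv_num x * dR (detG f) x / 2)
      / (detG f x * sqrt (detG f x)))"
    by (simp add: dR_divide_sqrt[OF smooth_on_curv_num smooth_on_detG open_\<Omega> x detG_pos[OF x]])
  also have "\<dots> = (dR curv_num x * detG f x - curv_num x * dR (detG f) x / 2) / (detG f x)\<^sup>2"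
    using detG_pos[OF x] by (simp add: power2_eq_square mult.assoc)
  finally show ?thesis .
qed

lemma dR_curv_num:
  assumes x: "x \<in> \<Omega>"
  shows "dR curv_num x = dR F x * dL E x / (8 * E x) - dR (dL F) x / 4"
proof -
  note sm = smooth_on_EFG smooth_on_dL[OF smooth_on_EFG(1) open_\<Omega>] smooth_on_dL[OF smooth_on_EFG(2) open_\<Omega>]
  have E8: "smooth_on \<Omega> (\<lambda>y. 8 * E y)" "dR (\<lambda>y. 8 * E y) x = 0"
    using smooth_on_linear[OF bounded_linear_mult_right open_\<Omega> sm(1)]
      dR_linear[OF bounded_linear_mult_right sm(1) open_\<Omega> x] dR_E[OF x] by auto
  have "8 * E y \<noteq> 0" if "y \<in> \<Omega>" for y using E_pos[OF that] by simp
  then have N1: "smooth_on \<Omega> (\<lambda>y. F y * dL E y / (8 * E y))"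
    by (intro smooth_on_divide smooth_on_mult E8(1) sm open_\<Omega>)
  have N2: "smooth_on \<Omega> (\<lambda>y. dL F y / 4)"
    by (rule smooth_on_linear[OF bounded_linear_divide open_\<Omega> sm(5)])
  have "dR (\<lambda>y. F y * dL E y / (8 * E y)) x = dR F x * dL E x / (8 * E x)"
    using dR_divide[OF smooth_on_mult[OF open_\<Omega> sm(2,4)] E8(1) open_\<Omega> x] E_pos[OF x] E8(2)
      dR_mult[OF sm(2,4) open_\<Omega> x] dR_dL_E[OF x]
    by (simp add: power2_eq_square)
  moreover have "dR (\<lambda>y. dL F y / 4) x = dR (dL F) x / 4"
    by (rule dR_linear[OF bounded_linear_divide sm(5) open_\<Omega> x])
  ultimately show ?thesis
    unfolding curv_num_def[abs_def] using dR_diff[OF N1 N2 open_\<Omega> x] by simp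
qed

lemma dR_detG:
  assumes x: "x \<in> \<Omega>"
  shows "dR (detG f) x = (E x * dR G x - 2 * F x * dR F x) / 16"
proof -
  note sm = smooth_on_EFG
  have "dR (detG f) x = dR (\<lambda>y. (E y * G y - F y * F y) / 16) x"
    by (rule dR_cong[OF open_\<Omega> x]) (simp add: detG_eq power2_eq_square)
  also have "\<dots> = (dR (\<lambda>y. E y * G y) x - dR (\<lambda>y. F y * F y) x) / 16"
    using dR_linear[OF bounded_linear_divide smooth_on_diff[OF open_\<Omega> smooth_on_mult[OF open_\<Omega> sm(1,3)]
        smooth_on_mult[OF open_\<Omega> sm(2,2)]] open_\<Omega> x]
      dR_diff[OF smooth_on_mult[OF open_\<Omega> sm(1,3)] smooth_on_mult[OF open_\<Omega> sm(2,2)] open_\<Omega> x]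
    by simp
  also have "\<dots> = (E x * dR G x - 2 * F x * dR F x) / 16"
    by (simp add: dR_mult[OF sm(1,3) open_\<Omega> x] dR_mult[OF sm(2,2) open_\<Omega> x] dR_E[OF x])
  finally show ?thesis .
qed

theorem gauss_curv_eq_minus_4:
  assumes x: "x \<in> \<Omega>"
  shows "gauss_curv f x = -4"
proof -
  have "(E x * G x - (F x)\<^sup>2) * ((dL (dL \<nu>) x \<bullet> dR (dR \<nu>) x) - E x * G x)
      = ((dL \<nu> x \<bullet> dL (dL \<nu>) x) * G x - dL F x * F x) * dR F x
      + (dL F x * E x - (dL \<nu> x \<bullet> dL (dL \<nu>) x) * F x) * (dR \<nu> x \<bullet> dR (dR \<nu>) x)"
    using gram_identity_tangent[OF \<nu>_unit \<nu>_orth_dL \<nu>_orth_dR \<nu>_inner_dL_dL \<nu>_inner_dR_dR, OF x x x x x]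
    by (simp add: E_def F_def G_def dL_F[OF x] dR_F[OF x] inner_commute)
  from curvature_algebra[OF E_pos[OF x] _ this]
  show ?thesis
    using detG_pos[OF x]
    by (simp add: gauss_curv_eq_quotient[OF x] dR_curv_num[OF x] dR_detG[OF x] detG_eq[OF x] curv_num_def
        dL_E[OF x] dR_dL_F[OF x] dR_G[OF x])
qed

end

theorem mainTheorem2:
  fixes \<Omega> :: "(real \<times> real) set" and f :: "real \<times> real \<Rightarrow> complex^2"
  assumes "open \<Omega>" and "connected \<Omega>" and "simply_connected \<Omega>"
    and "\<forall>x\<in>\<Omega>. f x \<noteq> 0"
    and "smooth_on \<Omega> f"
    and "\<forall>x\<in>\<Omega>. CP1_EL f x"
    and "\<forall>x\<in>\<Omega>. detG f x \<noteq> 0"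
  shows "\<forall>x\<in>\<Omega>. gauss_curv f x = -4"
proof -
  \<comment> \<open>(simple) connectedness only matters for integrating \<open>X\<close>; the curvature identity is local\<close>
  interpret CP1_surface \<Omega> f
    by unfold_locales (use assms in auto)
  show ?thesis using gauss_curv_eq_minus_4 by blast
qed

end
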